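(* Let $t\ge1$ and $n=2t^2+2t+1$. Let $\mathcal{C}_0\subseteq\mathbb{Z}_n^2$ be a linear $t$-error-correcting perfect code with generator matrix $G=[a~~b]$, and let $\mathcal{C}=\mathbf{x}+\mathcal{C}_0$ for some $\mathbf{x}=(x_1,x_2)\in\mathbb{Z}_n^2$. Let $\mathcal{S}$ be the set of perfect Sudoku grids with respect to $\mathcal{C}$, $\bar{\mathcal{S}}$ the set of equivalence classes of $\mathcal{S}$ under relabeling, and \[ \mathcal{G}_\mathcal{S}=\langle \tau_2^{x_1+x_2+1}\tau_1^{x_1-x_2}r,\ \tau_1^a\tau_2^b\rangle. \] Then every orbit (equivalence class) of the induced action of $\mathcal{G}_\mathcal{S}$ on $\bar{\mathcal{S}}$ has size dividing $4n$.
   Context: $\mathbb{Z}_n$ is the integers modulo $n$; Lee weight of $\mathbf{u}\in\mathbb{Z}_n^2$ is $\sum_i\min\{u_i,n-u_i\}$, Lee distance $d_L(\mathbf{u},\mathbf{v})=\mathrm{wt}_L(\mathbf{u}-\mathbf{v})$. A linear code is a submodule of $\mathbb{Z}_n^2$, with generator matrix whose rows form a minimal spanning set. A code with minimum Lee distance $d$ is perfect if, with $t=\lfloor(d-1)/2\rfloor$, the Lee balls $\mathcal{B}_t(\mathbf{c})$ around codewords cover $\mathbb{Z}_n^2$; $t$-error-correcting means $d\ge2t+1$. For $n=2t^2+2t+1$ such a code has $n$ codewords $\mathbf{c}_1,\dots,\mathbf{c}_n$, and the palette grid $\mathcal{I}_\mathcal{C}$ is the $n\times n$ array (rows/columns indexed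 by $\mathbb{Z}_n$) with entry $i$ at each position $(x,y)\in\mathcal{B}_t(\mathbf{c}_i)$. Two $n\times n$ arrays over $n$-sets are orthogonal if all $n^2$ ordered pairs of corresponding entries are distinct. A perfect Sudoku grid with respect to $\mathcal{C}$ is a Latin square of order $n$ on $[n]=\{1,\dots,n\}$ orthogonal to $\mathcal{I}_\mathcal{C}$. Relabeling: $S_1\sim S_2$ iff there is a bijection $\sigma:[n]\to[n]$ with $\sigma((S_1)_{i,j})=(S_2)_{i,j}$ for all $i,j$. Maps on arrays (indices mod $n$): $(r(A))_{i,j}=A_{n-1-j,i}$, $(\tau_1(A))_{i,j}=A_{i-1,j}$, $(\tau_2(A))_{i,j}=A_{i,j-1}$; the generated group acts by $\varphi\cdot A=\varphi(A)$. Elements of $\mathcal{G}_\mathcal{S}$ map $\mathcal{S}$ into $\mathcal{S}$ and commute with relabeling, so $\mathcal{G}_\mathcal{S}$ acts on $\bar{\mathcal{S}}$. *)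

theory Defs
  imports Main "HOL-Library.Product_Lexorder"
begin

(* Elements of Z_n^2 are represented by pairs of naturals (x,y) with x,y < n.
   An n x n array (rows/columns indexed by Z_n) is a function nat \<times> nat \<Rightarrow> nat;
   only its values on zn2 n matter, and grids are normalised to be 0 outside. *)

definition zn2 :: "nat \<Rightarrow> (nat \<times> nat) set" where
  "zn2 n = {0..<n} \<times> {0..<n}"

definition lee_wt :: "nat \<Rightarrow> nat \<times> nat \<Rightarrow> nat" where
  "lee_wt n u = min (fst u) (n - fst u) + min (snd u) (n - snd u)"

definition lee_dist :: "nat \<Rightarrow> nat \<times> nat \<Rightarrow> nat \<times> nat \<Rightarrow> nat" where
  "lee_dist n u v = lee_wt n ((fst u + n - fst v) mod n, (snd u + n - snd v) mod n)"

definition lee_ball :: "nat \<Rightarrow> nat \<Rightarrow> nat \<times> nat \<Rightarrow> (nat \<times> nat) set" where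
  "lee_ball n t c = {p \<in> zn2 n. lee_dist n p c \<le> t}"

definition lin_code :: "nat \<Rightarrow> nat \<Rightarrow> nat \<Rightarrow> (nat \<times> nat) set" where
  "lin_code n a b = {((k * a) mod n, (k * b) mod n) | k. True}"

definition translate_code :: "nat \<Rightarrow> nat \<times> nat \<Rightarrow> (nat \<times> nat) set \<Rightarrow> (nat \<times> nat) set" where
  "translate_code n x C = {((fst x + fst c) mod n, (snd x + snd c) mod n) | c. c \<in> C}"

definition min_lee_dist :: "nat \<Rightarrow> (nat \<times> nat) set \<Rightarrow> nat" where
  "min_lee_dist n C = Min {lee_dist n u v | u v. u \<in> C \<and> v \<in> C \<and> u \<noteq> v}"

definition is_perfect :: "nat \<Rightarrow> (nat \<times> nat) set \<Rightarrow> bool" where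
  "is_perfect n C \<longleftrightarrow>
     (\<Union>c\<in>C. lee_ball n ((min_lee_dist n C - 1) div 2) c) = zn2 n"

definition t_error_correcting :: "nat \<Rightarrow> nat \<Rightarrow> (nat \<times> nat) set \<Rightarrow> bool" where
  "t_error_correcting n t C \<longleftrightarrow> min_lee_dist n C \<ge> 2 * t + 1"

text \<open>Palette grid: codewords c_1,...,c_n enumerated in increasing (lexicographic) order;
  entry i on the ball of radius t around c_i.\<close>
definition palette :: "nat \<Rightarrow> nat \<Rightarrow> (nat \<times> nat) set \<Rightarrow> nat \<times> nat \<Rightarrow> nat" where
  "palette n t C p = (if p \<in> zn2 n then
      (THE i. i \<in> {1..n} \<and> p \<in> lee_ball n t (sorted_list_of_set C ! (i - 1)))
    else 0)"

definition latin_square :: "nat \<Rightarrow> (nat \<times> nat \<Rightarrow> nat) \<Rightarrow> bool" where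
  "latin_square n A \<longleftrightarrow>
     (\<forall>p\<in>zn2 n. A p \<in> {1..n}) \<and>
     (\<forall>i<n. inj_on (\<lambda>j. A (i, j)) {0..<n}) \<and>
     (\<forall>j<n. inj_on (\<lambda>i. A (i, j)) {0..<n})"

definition orthogonal :: "nat \<Rightarrow> (nat \<times> nat \<Rightarrow> nat) \<Rightarrow> (nat \<times> nat \<Rightarrow> nat) \<Rightarrow> bool" where
  "orthogonal n A B \<longleftrightarrow> inj_on (\<lambda>p. (A p, B p)) (zn2 n)"

definition perfect_sudoku_grids :: "nat \<Rightarrow> nat \<Rightarrow> (nat \<times> nat) set \<Rightarrow> (nat \<times> nat \<Rightarrow> nat) set" where
  "perfect_sudoku_grids n t C =
     {S. latin_square n S \<and> orthogonal n S (palette n t C) \<and> (\<forall>p. p \<notin> zn2 n \<longrightarrow> S p = 0)}"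

definition relabel_rel :: "nat \<Rightarrow> (nat \<times> nat \<Rightarrow> nat) set \<Rightarrow> ((nat \<times> nat \<Rightarrow> nat) \<times> (nat \<times> nat \<Rightarrow> nat)) set" where
  "relabel_rel n X = {(S1, S2). S1 \<in> X \<and> S2 \<in> X \<and>
     (\<exists>\<sigma>. bij_betw \<sigma> {1..n} {1..n} \<and> (\<forall>p\<in>zn2 n. \<sigma> (S1 p) = S2 p))}"

definition rot :: "nat \<Rightarrow> (nat \<times> nat \<Rightarrow> nat) \<Rightarrow> (nat \<times> nat \<Rightarrow> nat)" where
  "rot n A = (\<lambda>(i, j). if i < n \<and> j < n then A (n - 1 - j, i) else 0)"

definition tau1 :: "nat \<Rightarrow> (nat \<times> nat \<Rightarrow> nat) \<Rightarrow> (nat \<times> nat \<Rightarrow> nat)" where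
  "tau1 n A = (\<lambda>(i, j). if i < n \<and> j < n then A ((i + n - 1) mod n, j) else 0)"

definition tau2 :: "nat \<Rightarrow> (nat \<times> nat \<Rightarrow> nat) \<Rightarrow> (nat \<times> nat \<Rightarrow> nat)" where
  "tau2 n A = (\<lambda>(i, j). if i < n \<and> j < n then A (i, (j + n - 1) mod n) else 0)"

text \<open>Generated by two maps (all finite compositions); since the generators have finite
  order on arrays, this coincides with the generated group.\<close>
inductive_set generated :: "('a \<Rightarrow> 'a) \<Rightarrow> ('a \<Rightarrow> 'a) \<Rightarrow> ('a \<Rightarrow> 'a) set"
  for f g where
  gen_id: "id \<in> generated f g"
| gen_f: "\<phi> \<in> generated f g \<Longrightarrow> f \<circ> \<phi> \<in> generated f g"
| gen_g: "\<phi> \<in> generated f g \<Longrightarrow> g \<circ> \<phi> \<in> generated f g"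

definition G_S :: "nat \<Rightarrow> nat \<Rightarrow> nat \<Rightarrow> nat \<Rightarrow> nat \<Rightarrow> ((nat \<times> nat \<Rightarrow> nat) \<Rightarrow> (nat \<times> nat \<Rightarrow> nat)) set" where
  "G_S n a b x1 x2 = generated
     (tau2 n ^^ nat ((int x1 + int x2 + 1) mod int n) \<circ> tau1 n ^^ nat ((int x1 - int x2) mod int n) \<circ> rot n)
     (tau1 n ^^ a \<circ> tau2 n ^^ b)"

definition class_orbit :: "('a \<Rightarrow> 'a) set \<Rightarrow> 'a set set \<Rightarrow> 'a set \<Rightarrow> 'a set set" where
  "class_orbit G Q X = {Y \<in> Q. \<exists>\<phi>\<in>G. \<exists>S\<in>X. \<phi> S \<in> Y}"

end

(* Covering the points of Lee weight t + 1 forces a linear perfect t-code in Z_n^2,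
   n = t^2 + (t + 1)^2, to contain (t, t + 1) or (t + 1, t); hence the code is invariant under
   the quarter turn (u, v) -> (-v, u), which acts on its generator (a, b) as multiplication by
   some m, the generator has order n, and the packing radius is exactly t.  The two generators of
   G_S act on grids by reindexing along a quarter turn F about x (order 4) and a translation G by
   (a, b) (order n) with F G = G^m F; both are Lee isometries preserving the code, so they preserve
   perfect Sudoku grids and relabeling.  On an orbit of relabeling classes every group element acts
   as G^i F^j; F permutes the G-orbits, which all have one size dividing n, with a period dividing
   4, so the orbit has size dividing 4 n. *)

theory Submission
  imports Defs "HOL-Combinatorics.Orbits"
begin

section \<open>Orbits of two maps satisfying a conjugation relation\<close>

lemma funpow_closed: "(\<And>y. y \<in> A \<Longrightarrow> f y \<in> A) \<Longrightarrow> x \<in> A \<Longrightarrow> (f ^^ n) x \<in> A"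
  by (induction n) auto

lemma self_in_orbit_funpow:
  assumes "(f ^^ n) x = x" "0 < n"
  shows "x \<in> orbit f x"
  using assms by (auto simp: orbit_altdef) metis

lemma orbit_eq_range_funpow:
  assumes "(f ^^ n) x = x" "0 < n"
  shows "orbit f x = range (\<lambda>i. (f ^^ i) x)"
  using orbit_altdef_self_in[OF self_in_orbit_funpow[OF assms]] by auto

lemma orbit_eq_if_mem:
  assumes "(f ^^ n) x = x" "0 < n" "y \<in> orbit f x"
  shows "orbit f y = orbit f x"
  using assms(3) self_in_orbit_funpow[OF assms(1,2)]
  by (meson orbit_swap orbit_trans subsetI subset_antisym)

lemma card_orbit_dvd:
  assumes "(f ^^ n) x = x" "0 < n"
  shows "card (orbit f x) dvd n"
proof -
  have self: "x \<in> orbit f x"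
    using assms by (rule self_in_orbit_funpow)
  define p where "p = funpow_dist1 f x x"
  have card: "card (orbit f x) = p"
    unfolding p_def orbit_conv_funpow_dist1[OF self]
    by (simp add: card_image inj_on_funpow_dist1[OF self])
  have "(f ^^ (n mod p)) x = x"
    using funpow_mod_eq[OF funpow_dist1_prop[OF self]] assms(1) by (simp add: p_def)
  then have "n mod p = 0"
    using funpow_dist1_least[of "n mod p" f x x] by (fastforce simp: p_def)
  then show ?thesis
    using card by (simp add: mod_eq_0_iff_dvd)
qed

lemma inj_on_if_funpow_id:
  assumes "\<And>y. y \<in> A \<Longrightarrow> (f ^^ k) y = y" "0 < k"
  shows "inj_on f A"
proof (rule inj_onI)
  fix y z assume "y \<in> A" "z \<in> A" "f y = f z"
  then have "(f ^^ (k - 1)) (f y) = (f ^^ (k - 1)) (f z)" by simp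
  with assms show "y = z"
    using assms(1)[OF \<open>y \<in> A\<close>] assms(1)[OF \<open>z \<in> A\<close>]
    by (metis Suc_diff_1 funpow_simps_right(2) o_apply)
qed

lemma funpow_conjugate:
  assumes G: "\<And>y. y \<in> A \<Longrightarrow> G y \<in> A" and F: "\<And>y. y \<in> A \<Longrightarrow> F y \<in> A"
    and FG: "\<And>y. y \<in> A \<Longrightarrow> F (G y) = (G ^^ m) (F y)" and x: "x \<in> A"
  shows "(F ^^ j) ((G ^^ i) x) = (G ^^ (m ^ j * i)) ((F ^^ j) x)"
proof -
  have F_Gi: "F ((G ^^ i) z) = (G ^^ (m * i)) (F z)" if "z \<in> A" for i z
  proof (induction i)
    case (Suc i)
    have "F ((G ^^ Suc i) z) = (G ^^ m) (F ((G ^^ i) z))"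
      using FG funpow_closed[OF G that] by simp
    with Suc show ?case
      by (simp add: funpow_add[symmetric, THEN fun_cong, simplified])
  qed simp
  show ?thesis
  proof (induction j arbitrary: i)
    case (Suc j)
    have "(F ^^ Suc j) ((G ^^ i) x) = F ((G ^^ (m ^ j * i)) ((F ^^ j) x))"
      using Suc by simp
    also have "\<dots> = (G ^^ (m ^ Suc j * i)) ((F ^^ Suc j) x)"
      using F_Gi[OF funpow_closed[OF F x]] by (simp add: mult.assoc)
    finally show ?case .
  qed simp
qed

locale semidirect_maps =
  fixes A :: "'a set" and F G :: "'a \<Rightarrow> 'a" and k m n :: nat
  assumes F_closed: "\<And>y. y \<in> A \<Longrightarrow> F y \<in> A" and G_closed: "\<And>y. y \<in> A \<Longrightarrow> G y \<in> A"
    and F_order: "\<And>y. y \<in> A \<Longrightarrow> (F ^^ k) y = y" and G_order: "\<And>y. y \<in> A \<Longrightarrow> (G ^^ n) y = y"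
    and conjugate: "\<And>y. y \<in> A \<Longrightarrow> F (G y) = (G ^^ m) (F y)"
    and k_pos: "0 < k" and n_pos: "0 < n"
begin

lemma funpow_F_closed: "y \<in> A \<Longrightarrow> (F ^^ j) y \<in> A"
  and funpow_G_closed: "y \<in> A \<Longrightarrow> (G ^^ i) y \<in> A"
  using funpow_closed[of A F y j] funpow_closed[of A G y i] F_closed G_closed by blast+

lemma orbit_G: "y \<in> A \<Longrightarrow> orbit G y = range (\<lambda>i. (G ^^ i) y)"
  using orbit_eq_range_funpow[OF G_order n_pos] .

text \<open>The inverse \<open>F\<^bsup>k - 1\<^esup>\<close> of \<open>F\<close> conjugates \<open>G\<close> to a power of \<open>G\<close> as well, so \<open>F\<close> maps
  \<open>G\<close>-orbits onto \<open>G\<close>-orbits.\<close>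
lemma orbit_G_F: 
  assumes y: "y \<in> A"
  shows "orbit G (F y) = F ` orbit G y"
proof -
  have power: "(F ^^ j) ((G ^^ i) z) = (G ^^ (m ^ j * i)) ((F ^^ j) z)" if "z \<in> A" for i j z
    using funpow_conjugate[of A G F m] G_closed F_closed conjugate that by blast
  have "(G ^^ i) (F y) = F ((G ^^ (m ^ (k - 1) * i)) y)" for i
  proof -
    have "(G ^^ i) (F y) = (F ^^ Suc (k - 1)) ((G ^^ i) (F y))"
      using k_pos F_order funpow_G_closed[OF F_closed[OF y]] by simp
    also have "\<dots> = F ((G ^^ (m ^ (k - 1) * i)) ((F ^^ (k - 1)) (F y)))"
      using power[OF F_closed[OF y]] by simp
    also have "(F ^^ (k - 1)) (F y) = y"
      using k_pos F_order[OF y] by (metis Suc_diff_1 comp_apply funpow_Suc_right)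
    finally show ?thesis .
  qed
  moreover have "F ((G ^^ i) y) = (G ^^ (m * i)) (F y)" for i
    using power[OF y, of 1] by simp
  ultimately show ?thesis
    unfolding orbit_G[OF y] orbit_G[OF F_closed[OF y]] by (auto simp: image_iff) metis+
qed

text \<open>The \<open>G\<close>-orbits inside the set are permuted by \<open>F\<close> with period dividing \<open>k\<close>, and all
  have the same size, which divides \<open>n\<close>.\<close>
theorem card_orbit_dvd_mult:
  assumes X: "X \<in> A"
  shows "card {(G ^^ i) ((F ^^ j) X) | i j. True} dvd k * n"
proof -
  define T where "T j = orbit G ((F ^^ j) X)" for j
  have T_subset: "T j \<subseteq> A" for j
    unfolding T_def orbit_G[OF funpow_F_closed[OF X]] using funpow_G_closed funpow_F_closed[OF X]
    by auto
  have finite_T: "finite (T j)" for j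
    unfolding T_def
    by (rule finite_orbit[OF self_in_orbit_funpow[OF G_order[OF funpow_F_closed[OF X]] n_pos]])
  have T_Suc: "T (Suc j) = F ` T j" for j
    unfolding T_def using orbit_G_F[OF funpow_F_closed[OF X]] by simp
  have T_funpow: "(((`) F) ^^ j) (T 0) = T j" for j
    by (induction j) (simp_all add: T_Suc)
  have card_T: "card (T j) = card (T 0)" for j
    using inj_on_if_funpow_id[OF F_order k_pos]
    by (induction j) (simp_all add: T_Suc card_image inj_on_subset[OF _ T_subset])
  have T_period: "(((`) F) ^^ k) (T 0) = T 0"
    using T_funpow[of k] F_order[OF X] by (simp add: T_def)
  have range_T: "range T = orbit ((`) F) (T 0)"
    unfolding orbit_eq_range_funpow[OF T_period k_pos] T_funpow ..
  have "finite (range T)"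
    unfolding range_T by (rule finite_orbit[OF self_in_orbit_funpow[OF T_period k_pos]])
  moreover have "\<forall>U\<in>range T. \<forall>V\<in>range T. U \<noteq> V \<longrightarrow> U \<inter> V = {}"
    unfolding T_def using orbit_eq_if_mem[OF G_order[OF funpow_F_closed[OF X]] n_pos] by blast
  ultimately have "card (T 0) * card (range T) = card (\<Union> (range T))"
    using finite_T card_T by (intro card_partition) auto
  moreover have "card (range T) dvd k"
    unfolding range_T by (rule card_orbit_dvd[OF T_period k_pos])
  moreover have "card (T 0) dvd n"
    unfolding T_def using card_orbit_dvd[OF G_order[OF X] n_pos] by simp
  moreover have "{(G ^^ i) ((F ^^ j) X) | i j. True} = \<Union> (range T)"
    unfolding T_def using orbit_G[OF funpow_F_closed[OF X]] by auto
  ultimately show ?thesis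
    by (metis mult.commute mult_dvd_mono)
qed

end

lemma funpow_comp_in_generated: "(g ^^ i) \<circ> (f ^^ j) \<in> generated f g"
proof (induction i)
  case 0
  have "f ^^ j \<in> generated f g"
  proof (induction j)
    case (Suc j)
    then show ?case
      using generated.gen_f by (simp only: funpow.simps)
  qed (simp only: funpow.simps generated.gen_id)
  then show ?case by simp
next
  case (Suc i)
  then show ?case
    using generated.gen_g by (simp only: funpow.simps comp_assoc)
qed

definition induced_map :: "('a \<times> 'a) set \<Rightarrow> ('a \<Rightarrow> 'a) \<Rightarrow> 'a set \<Rightarrow> 'a set" where
  "induced_map R f X = (\<Union>x\<in>X. R `` {f x})"

locale compatible_maps =
  fixes P :: "'a set" and R :: "('a \<times> 'a) set" and f g :: "'a \<Rightarrow> 'a" and m :: nat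
  assumes equiv: "equiv P R"
    and f_respects: "\<And>x y. (x, y) \<in> R \<Longrightarrow> (f x, f y) \<in> R"
    and g_respects: "\<And>x y. (x, y) \<in> R \<Longrightarrow> (g x, g y) \<in> R"
    and commute: "\<And>x. x \<in> P \<Longrightarrow> f (g x) = (g ^^ m) (f x)"
begin

lemma respects_closed:
  assumes "\<And>x y. (x, y) \<in> R \<Longrightarrow> (h x, h y) \<in> R" "x \<in> P"
  shows "h x \<in> P"
  using assms equiv unfolding equiv_def refl_on_def by blast

lemma f_closed: "x \<in> P \<Longrightarrow> f x \<in> P"
  and g_closed: "x \<in> P \<Longrightarrow> g x \<in> P"
  using respects_closed f_respects g_respects by blast+

lemma funpow_respects:
  assumes "\<And>x y. (x, y) \<in> R \<Longrightarrow> (h x, h y) \<in> R" "(x, y) \<in> R"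
  shows "((h ^^ j) x, (h ^^ j) y) \<in> R"
  using assms by (induction j) auto

lemma induced_map_class:
  assumes "\<And>x y. (x, y) \<in> R \<Longrightarrow> (h x, h y) \<in> R" "x \<in> P"
  shows "induced_map R h (R `` {x}) = R `` {h x}"
proof -
  have "(\<lambda>x. R `` {h x}) respects R"
    by (rule congruentI) (rule equiv_class_eq[OF equiv assms(1)])
  then show ?thesis
    unfolding induced_map_def by (rule UN_equiv_class[OF equiv _ assms(2)])
qed

lemma induced_map_funpow_class:
  assumes "\<And>x y. (x, y) \<in> R \<Longrightarrow> (h x, h y) \<in> R" "x \<in> P"
  shows "(induced_map R h ^^ j) (R `` {x}) = R `` {(h ^^ j) x}"
proof (induction j)
  case (Suc j)
  have "((h ^^ j) y, (h ^^ j) z) \<in> R" if "(y, z) \<in> R" for y z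
    using funpow_respects[where h = h] assms(1) that by blast
  then have "(h ^^ j) x \<in> P"
    using respects_closed[where h = "h ^^ j"] assms(2) by blast
  with Suc show ?case
    using induced_map_class[OF assms(1)] by simp
qed simp

lemma generated_funpow_form:
  assumes "\<phi> \<in> generated f g"
  obtains i j where "\<And>x. x \<in> P \<Longrightarrow> \<phi> x = (g ^^ i) ((f ^^ j) x)"
proof -
  have "\<exists>i j. \<forall>x\<in>P. \<phi> x = (g ^^ i) ((f ^^ j) x)"
    using assms
  proof induction
    case gen_id
    show ?case by (intro exI[of _ 0]) simp
  next
    case (gen_f \<phi>)
    then obtain i j where "\<forall>x\<in>P. \<phi> x = (g ^^ i) ((f ^^ j) x)" by blast
    moreover have "f ((g ^^ i) ((f ^^ j) x)) = (g ^^ (m * i)) ((f ^^ Suc j) x)" if "x \<in> P" for x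
      using funpow_conjugate[of P g f m "(f ^^ j) x" 1 i] funpow_closed[of P f x j]
        f_closed g_closed commute that by simp
    ultimately show ?case
      by (intro exI[of _ "m * i"] exI[of _ "Suc j"]) auto
  next
    case (gen_g \<phi>)
    then obtain i j where "\<forall>x\<in>P. \<phi> x = (g ^^ i) ((f ^^ j) x)" by blast
    then show ?case
      by (intro exI[of _ "Suc i"] exI[of _ j]) auto
  qed
  then show ?thesis using that by blast
qed

lemma funpow_gf_closed: "x \<in> P \<Longrightarrow> (g ^^ i) ((f ^^ j) x) \<in> P"
  using funpow_closed[of P f x j] funpow_closed[of P g "(f ^^ j) x" i] f_closed g_closed by blast

lemma funpow_gf_respects: "(x, y) \<in> R \<Longrightarrow> ((g ^^ i) ((f ^^ j) x), (g ^^ i) ((f ^^ j) y)) \<in> R"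
  using funpow_respects[of f x y j] funpow_respects[of g "(f ^^ j) x" "(f ^^ j) y" i]
    f_respects g_respects by blast

lemma class_orbit_generated:
  assumes x: "x \<in> P"
  shows "class_orbit (generated f g) (P // R) (R `` {x}) =
      {R `` {(g ^^ i) ((f ^^ j) x)} | i j. True}"
proof (intro set_eqI iffI)
  fix Y assume "Y \<in> class_orbit (generated f g) (P // R) (R `` {x})"
  then obtain \<phi> y where Y: "Y \<in> P // R" and \<phi>: "\<phi> \<in> generated f g"
    and xy: "(x, y) \<in> R" and \<phi>y: "\<phi> y \<in> Y"
    unfolding class_orbit_def by blast
  obtain i j where ij: "\<And>z. z \<in> P \<Longrightarrow> \<phi> z = (g ^^ i) ((f ^^ j) z)"
    using generated_funpow_form[OF \<phi>] by blast
  have "y \<in> P"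
    using xy equiv unfolding equiv_def refl_on_def by blast
  then have "((g ^^ i) ((f ^^ j) x), \<phi> y) \<in> R"
    using ij funpow_gf_respects[OF xy] by simp
  moreover have "Y = R `` {\<phi> y}"
    using Y \<phi>y by (metis equiv Image_singleton_iff equiv_class_eq quotientE)
  ultimately have "Y = R `` {(g ^^ i) ((f ^^ j) x)}"
    using equiv_class_eq[OF equiv] by blast
  then show "Y \<in> {R `` {(g ^^ i) ((f ^^ j) x)} | i j. True}" by blast
next
  fix Y assume "Y \<in> {R `` {(g ^^ i) ((f ^^ j) x)} | i j. True}"
  then obtain i j where Y: "Y = R `` {((g ^^ i) \<circ> (f ^^ j)) x}" by auto
  have "Y \<in> P // R"
    unfolding Y using funpow_gf_closed[OF x] by (simp add: quotientI)
  moreover have "((g ^^ i) \<circ> (f ^^ j)) x \<in> Y"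
    unfolding Y using equiv_class_self[OF equiv funpow_gf_closed[OF x]] by simp
  ultimately show "Y \<in> class_orbit (generated f g) (P // R) (R `` {x})"
    unfolding class_orbit_def
    using funpow_comp_in_generated equiv_class_self[OF equiv x] by blast
qed

theorem card_class_orbit_dvd:
  assumes f_order: "\<And>x. x \<in> P \<Longrightarrow> (f ^^ k) x = x" and g_order: "\<And>x. x \<in> P \<Longrightarrow> (g ^^ n) x = x"
    and "0 < k" "0 < n" and X: "X \<in> P // R"
  shows "card (class_orbit (generated f g) (P // R) X) dvd k * n"
proof -
  obtain x where x: "x \<in> P" and X: "X = R `` {x}"
    using X by (rule quotientE)
  let ?F = "induced_map R f" and ?G = "induced_map R g"
  have F_class: "(?F ^^ j) (R `` {y}) = R `` {(f ^^ j) y}"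
    and G_class: "(?G ^^ j) (R `` {y}) = R `` {(g ^^ j) y}" if "y \<in> P" for y j
    using induced_map_funpow_class[where h = f, OF f_respects that]
      induced_map_funpow_class[where h = g, OF g_respects that] by blast+
  have induced: "?F Y \<in> P // R \<and> ?G Y \<in> P // R \<and> (?F ^^ k) Y = Y \<and> (?G ^^ n) Y = Y \<and>
      ?F (?G Y) = (?G ^^ m) (?F Y)" if "Y \<in> P // R" for Y
  proof -
    obtain y where y: "y \<in> P" and Y: "Y = R `` {y}"
      using \<open>Y \<in> P // R\<close> by (rule quotientE)
    show ?thesis
      unfolding Y
      using F_class[of y 1] G_class[of y 1] F_class[of y k] G_class[of y n] f_order g_order y
        F_class[of "g y" 1] G_class[of "f y" m] f_closed g_closed commute
      by (simp add: quotientI)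
  qed
  interpret quotient: semidirect_maps "P // R" ?F ?G k m n
    using induced assms by unfold_locales blast+
  have "card {(?G ^^ i) ((?F ^^ j) X) | i j. True} dvd k * n"
    using quotient.card_orbit_dvd_mult quotientI[OF x] X by blast
  moreover have "(?G ^^ i) ((?F ^^ j) X) = R `` {(g ^^ i) ((f ^^ j) x)}" for i j
    using F_class G_class x funpow_closed[of P f x j] f_closed X by simp
  ultimately show ?thesis
    using class_orbit_generated[OF x] unfolding X by simp
qed

end

section \<open>Residues modulo \<open>n\<close> and the Lee metric\<close>

definition to_zn :: "nat \<Rightarrow> int \<Rightarrow> nat" where
  "to_zn n z = nat (z mod int n)"

lemma of_nat_to_zn: "0 < n \<Longrightarrow> int (to_zn n z) = z mod int n"
  unfolding to_zn_def by simp

lemma to_zn_less: "0 < n \<Longrightarrow> to_zn n z < n"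
  unfolding to_zn_def by (simp add: nat_less_iff)

lemma to_zn_eq_iff: "0 < n \<Longrightarrow> to_zn n z = to_zn n w \<longleftrightarrow> int n dvd z - w"
  by (metis of_nat_to_zn mod_eq_dvd_iff of_nat_eq_iff)

lemma to_zn_of_nat: "v < n \<Longrightarrow> to_zn n (int v) = v"
  unfolding to_zn_def by simp

lemma to_zn_eq_nat_iff: "v < n \<Longrightarrow> to_zn n z = v \<longleftrightarrow> int n dvd z - int v"
  using to_zn_eq_iff[of n z "int v"] to_zn_of_nat[of v n] by simp

lemma dvd_of_nat_to_zn: "0 < n \<Longrightarrow> int n dvd int (to_zn n z) - z"
  by (simp add: of_nat_to_zn mod_eq_dvd_iff[symmetric])

lemma to_zn_diff_to_zn: "0 < n \<Longrightarrow> to_zn n (int (to_zn n z) - w) = to_zn n (z - w)"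
  by (simp add: to_zn_def of_nat_to_zn mod_diff_left_eq)

lemma to_zn_diff_to_zn': "0 < n \<Longrightarrow> to_zn n (w - int (to_zn n z)) = to_zn n (w - z)"
  by (simp add: to_zn_def of_nat_to_zn mod_diff_right_eq)

lemma to_zn_add_to_zn: "0 < n \<Longrightarrow> to_zn n (int (to_zn n z) + w) = to_zn n (z + w)"
  by (simp add: to_zn_def of_nat_to_zn mod_add_left_eq)

lemma pred_diff_to_zn:
  assumes n: "0 < n"
  shows "n - 1 - to_zn n z = to_zn n (- 1 - z)"
proof -
  have "to_zn n z \<le> n - 1"
    using to_zn_less[OF n, of z] by simp
  then have "int (n - 1 - to_zn n z) = int (n - 1) - int (to_zn n z)"
    by (rule of_nat_diff)
  also have "\<dots> = int n - 1 - z mod int n"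
    using n by (simp add: of_nat_to_zn)
  finally have eq: "int (n - 1 - to_zn n z) = int n - 1 - z mod int n" .
  have diff: "(- 1 - z) - int (n - 1 - to_zn n z) = (int (to_zn n z) - z) - int n"
    unfolding eq by (simp add: of_nat_to_zn[OF n])
  have "int n dvd (int (to_zn n z) - z) - int n"
    using dvd_of_nat_to_zn[OF n] by (rule dvd_diff) simp
  then have "int n dvd (- 1 - z) - int (n - 1 - to_zn n z)"
    by (simp only: diff)
  moreover have "n - 1 - to_zn n z < n"
    using n by simp
  ultimately show ?thesis
    by (metis to_zn_eq_nat_iff)
qed

lemma mod_pred_eq_to_zn: "i < n \<Longrightarrow> (i + n - 1) mod n = to_zn n (int i - 1)"
proof -
  assume "i < n"
  then have "int (i + n - 1) = (int i - 1) + int n"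
    by simp
  then have "int ((i + n - 1) mod n) = (int i - 1) mod int n"
    by (simp add: zmod_int)
  with \<open>i < n\<close> show ?thesis
    by (simp add: to_zn_def)
qed

lemma eq_if_dvd_diff_less: "i < n \<Longrightarrow> j < n \<Longrightarrow> int n dvd int i - int j \<Longrightarrow> i = j"
  using to_zn_eq_nat_iff to_zn_of_nat by metis

lemma dvd_abs_less_imp_eq_0: "d dvd z \<Longrightarrow> \<bar>z\<bar> < \<bar>d\<bar> \<Longrightarrow> z = 0"
  for d z :: int
  using dvd_imp_le_int[of z d] by (cases "z = 0") auto

lemma inj_on_to_zn_add: "0 < n \<Longrightarrow> inj_on (\<lambda>i. to_zn n (int i + c)) {0..<n}"
  by (rule inj_onI) (auto simp: to_zn_eq_iff intro: eq_if_dvd_diff_less)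

lemma inj_on_to_zn_diff: "0 < n \<Longrightarrow> inj_on (\<lambda>i. to_zn n (c - int i)) {0..<n}"
  by (rule inj_onI) (auto simp: to_zn_eq_iff dvd_diff_commute intro: eq_if_dvd_diff_less)

lemma zn2_iff: "p \<in> zn2 n \<longleftrightarrow> fst p < n \<and> snd p < n"
  unfolding zn2_def by (cases p) auto

definition lee_abs :: "nat \<Rightarrow> int \<Rightarrow> int" where
  "lee_abs n z = min (z mod int n) (int n - z mod int n)"

lemma lee_abs_nonneg: "0 < n \<Longrightarrow> 0 \<le> lee_abs n z"
  unfolding lee_abs_def by (simp add: order_less_imp_le)

lemma lee_abs_cong: "int n dvd z - w \<Longrightarrow> lee_abs n z = lee_abs n w"
  unfolding lee_abs_def by (metis mod_eq_dvd_iff)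

lemma lee_abs_uminus: "lee_abs n (- z) = lee_abs n z"
proof (cases "z mod int n = 0")
  case True
  then show ?thesis unfolding lee_abs_def by (simp add: zmod_zminus1_eq_if)
next
  case False
  then show ?thesis unfolding lee_abs_def by (simp add: zmod_zminus1_eq_if)
qed

lemma lee_abs_minus_commute: "lee_abs n (z - w) = lee_abs n (w - z)"
  using lee_abs_uminus[of n "z - w"] by simp

lemma lee_abs_eq_self: "0 \<le> z \<Longrightarrow> 2 * z < int n \<Longrightarrow> lee_abs n z = z"
  unfolding lee_abs_def by simp

lemma lee_abs_le_abs:
  assumes "0 < n"
  shows "lee_abs n z \<le> \<bar>z\<bar>"
proof -
  have "lee_abs n z \<le> z" if "0 \<le> z" for z
    using that assms unfolding lee_abs_def by (simp add: zmod_le_nonneg_dividend min.coboundedI1)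
  from this[of z] this[of "- z"] show ?thesis
    by (cases "0 \<le> z") (simp_all add: lee_abs_uminus)
qed

lemma lee_abs_representative:
  assumes "0 < n"
  obtains z' where "int n dvd z - z'" "\<bar>z'\<bar> = lee_abs n z"
proof (cases "z mod int n \<le> int n - z mod int n")
  case True
  then show ?thesis
    using that[of "z mod int n"] assms unfolding lee_abs_def
    by (simp add: mod_eq_dvd_iff[symmetric])
next
  case False
  have "int n dvd (z - z mod int n) + int n"
    by (simp add: mod_eq_dvd_iff[symmetric])
  then have "int n dvd z - (z mod int n - int n)"
    by (simp add: algebra_simps)
  then show ?thesis
    using that[of "z mod int n - int n"] False assms unfolding lee_abs_def
    by (simp add: order_less_imp_le)
qed

lemma lee_abs_triangle:
  assumes "0 < n"
  shows "lee_abs n (z + w) \<le> lee_abs n z + lee_abs n w"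
proof -
  obtain z' w' where z': "int n dvd z - z'" "\<bar>z'\<bar> = lee_abs n z"
    and w': "int n dvd w - w'" "\<bar>w'\<bar> = lee_abs n w"
    using lee_abs_representative[OF assms] by metis
  have "lee_abs n (z + w) = lee_abs n (z' + w')"
    using dvd_add[OF z'(1) w'(1)] by (intro lee_abs_cong) (simp add: algebra_simps)
  also have "\<dots> \<le> \<bar>z' + w'\<bar>"
    by (rule lee_abs_le_abs[OF assms])
  finally show ?thesis
    using abs_triangle_ineq[of z' w'] z'(2) w'(2) by linarith
qed

lemma lee_abs_odd_bound:
  assumes "odd n"
  shows "2 * lee_abs n z \<le> int n - 1"
proof -
  have "2 * lee_abs n z \<le> int n"
    unfolding lee_abs_def by (simp add: min_def)
  moreover have "2 * lee_abs n z \<noteq> int n"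
    using assms by (metis even_mult_iff even_numeral even_of_nat_iff)
  ultimately show ?thesis by linarith
qed

lemma lee_abs_tight_triangle:
  assumes "odd n" and s: "0 < s" "2 * s < int n" and tight: "lee_abs n w = lee_abs n (w - s) + s"
  obtains v where "s \<le> v" "2 * v < int n" "int n dvd w - v"
proof -
  define r where "r = w mod int n"
  have n: "0 < n" using \<open>odd n\<close> by (rule odd_pos)
  have r: "0 \<le> r" "r < int n" unfolding r_def using n by auto
  have dvd: "int n dvd w - r" unfolding r_def by (simp add: mod_eq_dvd_iff[symmetric])
  have lee_w: "lee_abs n w = min r (int n - r)" unfolding lee_abs_def r_def by simp
  have lee_ws: "lee_abs n (w - s) = lee_abs n (r - s)"
    using dvd by (intro lee_abs_cong) (simp add: algebra_simps)
  show ?thesis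
  proof (cases "2 * r < int n")
    case True
    then have "lee_abs n (r - s) = r - s" using lee_w lee_ws tight by simp
    then have "s \<le> r" using lee_abs_nonneg[OF n, of "r - s"] by simp
    then show ?thesis using that True dvd by blast
  next
    case False
    have "(r - s) mod int n = r - s" using False s r by (intro mod_pos_pos_trivial) linarith+
    then have "lee_abs n (r - s) = min (r - s) (int n - (r - s))" unfolding lee_abs_def by simp
    moreover have "lee_abs n (r - s) = int n - r - s" using tight lee_ws lee_w False by simp
    ultimately have "2 * r = int n \<or> s = 0" by linarith
    with \<open>odd n\<close> s show ?thesis
      by (metis even_mult_iff even_numeral even_of_nat_iff less_irrefl)
  qed
qed

lemma lee_dist_eq_lee_abs:
  assumes "u \<in> zn2 n" "v \<in> zn2 n"
  shows "int (lee_dist n u v) =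
      lee_abs n (int (fst u) - int (fst v)) + lee_abs n (int (snd u) - int (snd v))"
proof -
  have "int (min ((x + n - y) mod n) (n - (x + n - y) mod n)) = lee_abs n (int x - int y)"
    if "y < n" for x y
  proof -
    have "int (x + n - y) = (int x - int y) + int n"
      using that by simp
    then have "int ((x + n - y) mod n) = (int x - int y) mod int n"
      by (simp add: zmod_int)
    moreover have "(x + n - y) mod n < n" using that by simp
    ultimately show ?thesis unfolding lee_abs_def by simp
  qed
  with assms show ?thesis
    unfolding lee_dist_def lee_wt_def zn2_iff by simp
qed

lemma lee_dist_to_zn:
  assumes "0 < n"
  shows "int (lee_dist n (to_zn n z1, to_zn n z2) (to_zn n w1, to_zn n w2)) =
      lee_abs n (z1 - w1) + lee_abs n (z2 - w2)"
proof -
  have "lee_abs n (int (to_zn n z) - int (to_zn n w)) = lee_abs n (z - w)" for z w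
    by (rule lee_abs_cong) (simp add: of_nat_to_zn[OF assms] mod_eq_dvd_iff[symmetric] mod_diff_eq)
  then show ?thesis
    using lee_dist_eq_lee_abs[of "(to_zn n z1, to_zn n z2)" n "(to_zn n w1, to_zn n w2)"]
    by (simp add: zn2_iff to_zn_less[OF assms])
qed

lemma lee_diamond:
  fixes Q :: int
  assumes "0 \<le> Q"
  obtains D :: "(int \<times> int) set" where "finite D" "card D = nat ((Q + 1)^2 + Q^2)"
    "\<And>v. v \<in> D \<Longrightarrow> \<bar>fst v\<bar> + \<bar>snd v\<bar> \<le> Q"
proof -
  define D1 where "D1 = (\<lambda>(i, j). (i - j, i + j - Q)) ` ({0..Q} \<times> {0..Q})"
  define D2 where "D2 = (\<lambda>(i, j). (i - j, i + j - Q + 1)) ` ({0..Q - 1} \<times> {0..Q - 1})"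
  have "inj_on (\<lambda>(i, j). (i - j, i + j - Q)) ({0..Q} \<times> {0..Q})"
    "inj_on (\<lambda>(i, j). (i - j, i + j - Q + 1)) ({0..Q - 1} \<times> {0..Q - 1})"
    by (auto intro!: inj_onI)
  then have "card D1 = nat (Q + 1) * nat (Q + 1)" "card D2 = nat Q * nat Q"
    unfolding D1_def D2_def by (simp_all add: card_image card_cartesian_product)
  moreover have "D1 \<inter> D2 = {}"
    unfolding D1_def D2_def by auto presburger
  ultimately have "card (D1 \<union> D2) = nat ((Q + 1)^2 + Q^2)"
    using assms
    by (simp add: D1_def D2_def card_Un_disjoint power2_eq_square nat_mult_distrib nat_add_distrib)
  moreover have "\<bar>fst v\<bar> + \<bar>snd v\<bar> \<le> Q" if "v \<in> D1 \<union> D2" for v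
    using that unfolding D1_def D2_def by (auto simp: abs_if)
  ultimately show ?thesis
    using that[of "D1 \<union> D2"] by (simp add: D1_def D2_def)
qed

section \<open>The lattice of a linear code\<close>

definition in_lattice :: "nat \<Rightarrow> nat \<Rightarrow> nat \<Rightarrow> int \<Rightarrow> int \<Rightarrow> bool" where
  "in_lattice n a b u v \<longleftrightarrow> (\<exists>k. int n dvd u - k * int a \<and> int n dvd v - k * int b)"

lemma in_lattice_generator: "in_lattice n a b (int a) (int b)"
  unfolding in_lattice_def by (rule exI[of _ 1]) simp

lemma in_lattice_add:
  assumes "in_lattice n a b u v" "in_lattice n a b u' v'"
  shows "in_lattice n a b (u + u') (v + v')"
proof -
  obtain k k' where "int n dvd u - k * int a" "int n dvd v - k * int b"
    "int n dvd u' - k' * int a" "int n dvd v' - k' * int b"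
    using assms unfolding in_lattice_def by blast
  then have "int n dvd (u - k * int a) + (u' - k' * int a)"
      "int n dvd (v - k * int b) + (v' - k' * int b)"
    by simp_all
  then show ?thesis
    unfolding in_lattice_def by (intro exI[of _ "k + k'"]) (simp add: algebra_simps)
qed

lemma in_lattice_mult:
  assumes "in_lattice n a b u v"
  shows "in_lattice n a b (c * u) (c * v)"
proof -
  obtain k where "int n dvd u - k * int a" "int n dvd v - k * int b"
    using assms unfolding in_lattice_def by blast
  then have "int n dvd c * (u - k * int a)" "int n dvd c * (v - k * int b)"
    by simp_all
  then show ?thesis
    unfolding in_lattice_def by (intro exI[of _ "c * k"]) (simp add: algebra_simps)
qed

lemma in_lattice_diff:
  assumes "in_lattice n a b u v" "in_lattice n a b u' v'"
  shows "in_lattice n a b (u - u') (v - v')"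
  using in_lattice_add[OF assms(1) in_lattice_mult[OF assms(2), of "- 1"]] by simp

lemma in_lattice_cong:
  assumes "in_lattice n a b u v" "int n dvd u' - u" "int n dvd v' - v"
  shows "in_lattice n a b u' v'"
proof -
  obtain k where k: "int n dvd u - k * int a" "int n dvd v - k * int b"
    using assms(1) unfolding in_lattice_def by blast
  have "u' - k * int a = (u' - u) + (u - k * int a)" "v' - k * int b = (v' - v) + (v - k * int b)"
    by simp_all
  then show ?thesis
    unfolding in_lattice_def using assms(2,3) k by (metis dvd_add)
qed

lemma in_lattice_swap: "in_lattice n a b u v \<longleftrightarrow> in_lattice n b a v u"
  unfolding in_lattice_def by blast

text \<open>Modulo \<open>n = T\<^sup>2 + (T + 1)\<^sup>2\<close>, the rotation \<open>(u, v) \<mapsto> (- v, u)\<close> acts on \<open>(T, T + 1)\<close> as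
  multiplication by \<open>2 T + 1\<close>, and if \<open>(T, T + 1) = j (a, b)\<close> then \<open>b - a\<close> is an inverse of \<open>j\<close>.\<close>
lemma in_lattice_rotate_generator:
  assumes n: "int n = 2 * T * T + 2 * T + 1" and lat: "in_lattice n a b T (T + 1)"
  shows "in_lattice n a b (- int b) (int a)"
proof -
  obtain j where "int n dvd T - j * int a" "int n dvd T + 1 - j * int b"
    using lat unfolding in_lattice_def by blast
  moreover define d1 d2 where "d1 = T - j * int a" and "d2 = T + 1 - j * int b"
  ultimately have d: "int n dvd d1" "int n dvd d2"
    by simp_all
  define c where "c = (int b - int a) * (2 * T + 1)"
  have "- int b - c * T = (int b - int a) * d2 + int b * (d1 - d2) - (int b - int a) * int n"
    unfolding c_def d1_def d2_def n by algebra
  then have "int n dvd - int b - c * T"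
    using d by (metis dvd_add dvd_diff dvd_mult dvd_triv_right)
  moreover have
    "int a - c * (T + 1) = - (int b - int a) * d1 - int a * (d1 - d2) - (int b - int a) * int n"
    unfolding c_def d1_def d2_def n by algebra
  then have "int n dvd int a - c * (T + 1)"
    using d by (metis dvd_diff dvd_mult dvd_triv_right mult_minus_left)
  ultimately show ?thesis
    using in_lattice_cong[OF in_lattice_mult[OF lat, of c]] by blast
qed

lemma in_lattice_rotate:
  assumes "in_lattice n a b (- int b) (int a)" "in_lattice n a b u v"
  shows "in_lattice n a b (- v) u"
proof -
  obtain k where k: "int n dvd u - k * int a" "int n dvd v - k * int b"
    using assms(2) unfolding in_lattice_def by blast
  have "int n dvd - v - k * (- int b)"
    using k(2) by (metis dvd_minus_iff minus_diff_eq mult_minus_right diff_minus_eq_add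
        uminus_add_conv_diff)
  then show ?thesis
    using in_lattice_cong[OF in_lattice_mult[OF assms(1), of k]] k(1) by simp
qed

lemma rotation_multiplier:
  assumes "0 < n" "in_lattice n a b (- int b) (int a)"
  obtains m :: nat where "int n dvd int a + int m * int b" "int n dvd int b - int m * int a"
proof -
  obtain k where k: "int n dvd - int b - k * int a" "int n dvd int a - k * int b"
    using assms(2) unfolding in_lattice_def by blast
  define m where "m = to_zn n (- k)"
  have m: "int n dvd int m + k"
    using dvd_of_nat_to_zn[OF assms(1), of "- k"] by (simp add: m_def)
  have "int a + int m * int b = (int a - k * int b) + (int m + k) * int b"
    "int b - int m * int a = - (- int b - k * int a) - (int m + k) * int a"
    by algebra+
  then show ?thesis
    using that k m by (metis dvd_add dvd_diff dvd_minus_iff dvd_mult2)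
qed

lemma add_to_zn_mult_eq:
  assumes "y < n" "int n dvd int y - int x - k * int a"
  shows "(x + (to_zn n k * a) mod n) mod n = y"
proof -
  have n: "0 < n" using assms(1) by simp
  have "int ((x + (to_zn n k * a) mod n) mod n) = (int x + k * int a) mod int n"
    by (simp add: zmod_int of_nat_to_zn[OF n]) (metis mod_add_right_eq mod_mult_left_eq)
  also have "\<dots> = int y mod int n"
    using assms(2) by (simp add: mod_eq_dvd_iff dvd_diff_commute algebra_simps)
  also have "\<dots> = int y"
    using assms(1) by simp
  finally show ?thesis by simp
qed

lemma translate_lin_code_iff:
  assumes "0 < n"
  shows "c \<in> translate_code n (x1, x2) (lin_code n a b) \<longleftrightarrow>
    c \<in> zn2 n \<and> in_lattice n a b (int (fst c) - int x1) (int (snd c) - int x2)"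
proof
  assume "c \<in> translate_code n (x1, x2) (lin_code n a b)"
  then obtain k where c: "c = ((x1 + (k * a) mod n) mod n, (x2 + (k * b) mod n) mod n)"
    unfolding translate_code_def lin_code_def by auto
  have "int n dvd int (fst c) - int x1 - int k * int a"
      "int n dvd int (snd c) - int x2 - int k * int b"
    unfolding c
    by (simp_all add: zmod_int mod_eq_dvd_iff[symmetric] mod_simps algebra_simps flip: of_nat_mult)
  then show "c \<in> zn2 n \<and> in_lattice n a b (int (fst c) - int x1) (int (snd c) - int x2)"
    unfolding in_lattice_def zn2_iff c using assms by auto
next
  assume "c \<in> zn2 n \<and> in_lattice n a b (int (fst c) - int x1) (int (snd c) - int x2)"
  then obtain k where c: "fst c < n" "snd c < n"
    and k: "int n dvd int (fst c) - int x1 - k * int a" "int n dvd int (snd c) - int x2 - k * int b"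
    unfolding in_lattice_def zn2_iff by blast
  then have "c = ((x1 + (to_zn n k * a) mod n) mod n, (x2 + (to_zn n k * b) mod n) mod n)"
    using c add_to_zn_mult_eq by (simp add: prod_eq_iff)
  then show "c \<in> translate_code n (x1, x2) (lin_code n a b)"
    unfolding translate_code_def lin_code_def by auto
qed

lemma lin_code_iff:
  assumes "0 < n"
  shows "c \<in> lin_code n a b \<longleftrightarrow> c \<in> zn2 n \<and> in_lattice n a b (int (fst c)) (int (snd c))"
proof -
  have "translate_code n (0, 0) (lin_code n a b) = lin_code n a b"
    unfolding translate_code_def lin_code_def by (auto simp: image_iff) (metis mod_mod_trivial)
  then show ?thesis
    using translate_lin_code_iff[OF assms, of c 0 0 a b] by simp
qed

section \<open>Linear perfect Lee codes of length \<open>2 t\<^sup>2 + 2 t + 1\<close>\<close>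

locale perfect_lee_code =
  fixes t n a b :: nat
  assumes t_pos: "1 \<le> t" and n_eq: "n = 2 * t^2 + 2 * t + 1"
    and a_less: "a < n" and b_less: "b < n" and ab_nonzero: "(a, b) \<noteq> (0, 0)"
    and perfect: "is_perfect n (lin_code n a b)"
    and correcting: "t_error_correcting n t (lin_code n a b)"
begin

abbreviation lattice :: "int \<Rightarrow> int \<Rightarrow> bool" where
  "lattice \<equiv> in_lattice n a b"

definition min_dist :: nat where
  "min_dist = min_lee_dist n (lin_code n a b)"

definition radius :: nat where
  "radius = (min_dist - 1) div 2"

lemma n_odd: "odd n"
  using n_eq by simp

lemma n_ge_5: "5 \<le> n"
proof -
  have "1 \<le> t^2" using t_pos by simp
  then show ?thesis using n_eq t_pos by linarith
qed

lemma n_pos: "0 < n"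
  using n_ge_5 by simp

lemma lin_code_iff_lattice: "c \<in> lin_code n a b \<longleftrightarrow> c \<in> zn2 n \<and> lattice (int (fst c)) (int (snd c))"
  by (rule lin_code_iff[OF n_pos])

lemma finite_lin_code: "finite (lin_code n a b)"
  by (rule finite_subset[of _ "zn2 n"]) (auto simp: lin_code_iff_lattice zn2_def)

lemma distance_set_finite:
  "finite {lee_dist n u v | u v. u \<in> lin_code n a b \<and> v \<in> lin_code n a b \<and> u \<noteq> v}"
proof (rule finite_subset)
  show "finite ((\<lambda>(u, v). lee_dist n u v) ` (lin_code n a b \<times> lin_code n a b))"
    using finite_lin_code by simp
qed auto

lemma min_dist_le: "u \<in> lin_code n a b \<Longrightarrow> v \<in> lin_code n a b \<Longrightarrow> u \<noteq> v \<Longrightarrow> min_dist \<le> lee_dist n u v"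
  unfolding min_dist_def min_lee_dist_def by (rule Min_le[OF distance_set_finite]) blast

lemma min_dist_attained:
  obtains u v where "u \<in> lin_code n a b" "v \<in> lin_code n a b" "min_dist = lee_dist n u v"
proof -
  let ?D = "{lee_dist n u v | u v. u \<in> lin_code n a b \<and> v \<in> lin_code n a b \<and> u \<noteq> v}"
  have "(0, 0) \<in> lin_code n a b" "(a, b) \<in> lin_code n a b"
    unfolding lin_code_def using a_less b_less by (auto intro: exI[of _ 0] exI[of _ 1])
  then have "?D \<noteq> {}"
    using ab_nonzero by blast
  then have "min_dist \<in> ?D"
    unfolding min_dist_def min_lee_dist_def by (rule Min_in[OF distance_set_finite])
  then show ?thesis
    using that by blast
qed

lemma min_dist_ge: "2 * t + 1 \<le> min_dist"
  using correcting unfolding t_error_correcting_def min_dist_def .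

lemma t_le_radius: "t \<le> radius"
  unfolding radius_def using min_dist_ge by simp

lemma radius_min_dist: "2 * radius + 1 \<le> min_dist"
  unfolding radius_def using min_dist_ge by simp

lemma radius_less: "2 * int radius + 2 < int n"
proof -
  obtain u v where "u \<in> lin_code n a b" "v \<in> lin_code n a b" "min_dist = lee_dist n u v"
    by (rule min_dist_attained)
  then have "int min_dist =
      lee_abs n (int (fst u) - int (fst v)) + lee_abs n (int (snd u) - int (snd v))"
    using lee_dist_eq_lee_abs lin_code_iff_lattice by simp
  then have "2 * int min_dist \<le> 2 * int n - 2"
    using lee_abs_odd_bound[OF n_odd, of "int (fst u) - int (fst v)"]
      lee_abs_odd_bound[OF n_odd, of "int (snd u) - int (snd v)"] by linarith
  then have "2 * int radius + 2 \<le> int n"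
    using radius_min_dist by linarith
  moreover have "2 * int radius + 2 \<noteq> int n"
    using n_odd by (metis dvd_add_triv_right_iff dvd_triv_left even_of_nat_iff)
  ultimately show ?thesis by linarith
qed

lemma lattice_weight_ge:
  assumes "lattice u v" "\<not> (int n dvd u \<and> int n dvd v)"
  shows "int min_dist \<le> lee_abs n u + lee_abs n v"
proof -
  define c where "c = (to_zn n u, to_zn n v)"
  have c: "c \<in> lin_code n a b"
    unfolding c_def lin_code_iff_lattice zn2_iff using n_pos to_zn_less assms(1)
    by (auto intro: in_lattice_cong simp: dvd_of_nat_to_zn)
  have zero: "(0, 0) \<in> lin_code n a b"
    unfolding lin_code_def by (auto intro: exI[of _ 0])
  have "c \<noteq> (0, 0)"
    using assms(2) by (auto simp: c_def to_zn_eq_nat_iff[OF n_pos])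
  then have "min_dist \<le> lee_dist n c (0, 0)"
    using min_dist_le c zero by blast
  moreover have "int (lee_dist n c (0, 0)) = lee_abs n u + lee_abs n v"
    using lee_dist_eq_lee_abs[of c n "(0, 0)"] c zero lin_code_iff_lattice
    by (simp add: c_def) (metis dvd_of_nat_to_zn[OF n_pos] lee_abs_cong)
  ultimately show ?thesis by linarith
qed

lemma lattice_covers:
  obtains u v where "lattice u v" "lee_abs n (q1 - u) + lee_abs n (q2 - v) \<le> int radius"
proof -
  have cover: "(\<Union>c\<in>lin_code n a b. lee_ball n radius c) = zn2 n"
    using perfect unfolding is_perfect_def radius_def min_dist_def .
  define p where "p = (to_zn n q1, to_zn n q2)"
  have p: "p \<in> zn2 n"
    unfolding p_def zn2_iff using to_zn_less[OF n_pos] by simp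
  then obtain c where c: "c \<in> lin_code n a b" "lee_dist n p c \<le> radius"
    using cover unfolding lee_ball_def by blast
  have "lee_abs n (int (fst p) - int (fst c)) = lee_abs n (q1 - int (fst c))"
    "lee_abs n (int (snd p) - int (snd c)) = lee_abs n (q2 - int (snd c))"
    unfolding p_def using dvd_of_nat_to_zn[OF n_pos] by (auto intro: lee_abs_cong)
  then show ?thesis
    using that[of "int (fst c)" "int (snd c)"] c lin_code_iff_lattice
      lee_dist_eq_lee_abs[OF p, of c]
    by fastforce
qed

text \<open>The point \<open>(j, radius + 1 - j)\<close> has Lee weight \<open>radius + 1\<close>, so the lattice vector covering
  it is nonzero; the minimum distance then forces all triangle inequalities to be tight, which
  pins that lattice vector down to the antidiagonal \<open>u + v = 2 radius + 1\<close>.\<close>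
lemma antidiagonal_lattice_point:
  assumes j: "1 \<le> j" "j \<le> int radius"
  obtains u where "j \<le> u" "u \<le> int radius + j" "lattice u (2 * int radius + 1 - u)"
proof -
  let ?R = "int radius"
  obtain w1 w2 where w: "lattice w1 w2"
      and cov: "lee_abs n (j - w1) + lee_abs n ((?R + 1 - j) - w2) \<le> ?R"
    by (rule lattice_covers)
  have R: "2 * ?R + 2 < int n" by (rule radius_less)
  have lee_j: "lee_abs n j = j" and lee_j': "lee_abs n (?R + 1 - j) = ?R + 1 - j"
    using j R by (simp_all add: lee_abs_eq_self)
  have "\<not> (int n dvd w1 \<and> int n dvd w2)"
  proof
    assume "int n dvd w1 \<and> int n dvd w2"
    then have "lee_abs n (j - w1) = lee_abs n j"
        "lee_abs n ((?R + 1 - j) - w2) = lee_abs n (?R + 1 - j)"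
      by (auto intro: lee_abs_cong)
    then show False using cov lee_j lee_j' by linarith
  qed
  then have d: "2 * ?R + 1 \<le> lee_abs n w1 + lee_abs n w2"
    using lattice_weight_ge[OF w] radius_min_dist by linarith
  have t1: "lee_abs n w1 \<le> lee_abs n (w1 - j) + j"
    using lee_abs_triangle[OF n_pos, of "w1 - j" j] lee_j by simp
  have t2: "lee_abs n w2 \<le> lee_abs n (w2 - (?R + 1 - j)) + (?R + 1 - j)"
    using lee_abs_triangle[OF n_pos, of "w2 - (?R + 1 - j)" "?R + 1 - j"] lee_j' by simp
  have s: "lee_abs n (w1 - j) = lee_abs n (j - w1)"
      "lee_abs n (w2 - (?R + 1 - j)) = lee_abs n ((?R + 1 - j) - w2)"
    by (rule lee_abs_minus_commute)+
  have "lee_abs n w1 = lee_abs n (w1 - j) + j"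
    and "lee_abs n w2 = lee_abs n (w2 - (?R + 1 - j)) + (?R + 1 - j)"
    using t1 t2 s cov d by linarith+
  moreover have "0 < j" "2 * j < int n" "0 < ?R + 1 - j" "2 * (?R + 1 - j) < int n"
    using j R by (simp_all add: algebra_simps)
  ultimately obtain v1 v2 where v1: "j \<le> v1" "2 * v1 < int n" "int n dvd w1 - v1"
    and v2: "?R + 1 - j \<le> v2" "2 * v2 < int n" "int n dvd w2 - v2"
    using lee_abs_tight_triangle[OF n_odd] by metis
  have "lee_abs n w1 = v1" "lee_abs n w2 = v2"
    using v1 v2 j lee_abs_cong[OF v1(3)] lee_abs_cong[OF v2(3)] by (simp_all add: lee_abs_eq_self)
  then have sum: "v2 = 2 * ?R + 1 - v1"
    using t1 t2 s cov d by linarith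
  have "lattice v1 (2 * ?R + 1 - v1)"
    using v1(3) v2(3) sum by (intro in_lattice_cong[OF w]) (simp_all add: dvd_diff_commute)
  then show ?thesis
    using that v1 v2 sum by auto
qed

lemma antidiagonal_separated:
  assumes "lattice u (2 * int radius + 1 - u)" "lattice u' (2 * int radius + 1 - u')"
    and "u \<noteq> u'" "\<bar>u - u'\<bar> < int n"
  shows "int radius + 1 \<le> \<bar>u - u'\<bar>"
proof -
  have "lattice (u - u') (u' - u)"
    using in_lattice_diff[OF assms(1,2)] by simp
  moreover have "\<not> int n dvd u - u'"
    using dvd_abs_less_imp_eq_0[of "int n" "u - u'"] assms(3,4) by auto
  ultimately have "int min_dist \<le> lee_abs n (u - u') + lee_abs n (u' - u)"
    using lattice_weight_ge by blast
  then show ?thesis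
    using lee_abs_minus_commute[of n u u'] lee_abs_le_abs[OF n_pos, of "u - u'"] radius_min_dist
    by linarith
qed

lemma antidiagonal_cases:
  "(\<exists>u. (u = int radius \<or> u = int radius + 1) \<and> lattice u (2 * int radius + 1 - u)) \<or>
   (\<exists>u. lattice u (2 * int radius + 1 - u) \<and> lattice (u + int radius + 1) (int radius - u))"
proof -
  let ?R = "int radius"
  have R: "1 \<le> ?R" "2 * ?R + 2 < int n"
    using t_le_radius t_pos radius_less by linarith+
  obtain u where u: "1 \<le> u" "u \<le> ?R + 1" "lattice u (2 * ?R + 1 - u)"
    using antidiagonal_lattice_point[of 1] R by auto
  obtain u' where u': "?R \<le> u'" "u' \<le> ?R + ?R" "lattice u' (2 * ?R + 1 - u')"
    using antidiagonal_lattice_point[of ?R] R by auto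
  show ?thesis
  proof (cases "u = u'")
    case True
    then have "u' = ?R \<or> u' = ?R + 1"
      using u u' by linarith
    then show ?thesis
      using u' by blast
  next
    case False
    then have "?R + 1 \<le> \<bar>u - u'\<bar>"
      using antidiagonal_separated[OF u(3) u'(3)] u u' R by simp
    then have uu': "u + ?R + 1 \<le> u'"
      using u u' R by (auto simp: abs_if split: if_splits)
    obtain u'' where u'': "u + 1 \<le> u''" "u'' \<le> ?R + (u + 1)" "lattice u'' (2 * ?R + 1 - u'')"
      using antidiagonal_lattice_point[of "u + 1"] u uu' u' by auto
    have "?R + 1 \<le> \<bar>u - u''\<bar>"
      using antidiagonal_separated[OF u(3) u''(3)] u u'' R by simp
    then have "u'' = u + ?R + 1"
      using u'' by (auto simp: abs_if split: if_splits)
    then show ?thesis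
      using u(3) u''(3) by (auto simp: algebra_simps)
  qed
qed

lemma lattice_annihilated:
  assumes "lattice u v" "int n dvd k * int a" "int n dvd k * int b"
  shows "int n dvd k * u" "int n dvd k * v"
proof -
  obtain m where m: "int n dvd u - m * int a" "int n dvd v - m * int b"
    using assms(1) unfolding in_lattice_def by blast
  have "k * u = k * (u - m * int a) + m * (k * int a)"
      "k * v = k * (v - m * int b) + m * (k * int b)"
    by algebra+
  then show "int n dvd k * u" "int n dvd k * v"
    using m assms(2,3) by (metis dvd_add dvd_mult)+
qed

lemma generator_order:
  assumes ka: "int n dvd k * int a" and kb: "int n dvd k * int b"
  shows "int n dvd k"
  using antidiagonal_cases
proof
  assume "\<exists>u. (u = int radius \<or> u = int radius + 1) \<and> lattice u (2 * int radius + 1 - u)"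
  then obtain u where u: "u = int radius \<or> u = int radius + 1" "lattice u (2 * int radius + 1 - u)"
    by blast
  have "int n dvd k * u" "int n dvd k * (2 * int radius + 1 - u)"
    using lattice_annihilated[OF u(2) ka kb] by auto
  moreover have
    "k = k * (2 * int radius + 1 - u) - k * u \<or> k = k * u - k * (2 * int radius + 1 - u)"
    using u(1) by (auto simp: algebra_simps)
  ultimately show ?thesis
    by (metis dvd_diff)
next
  assume "\<exists>u. lattice u (2 * int radius + 1 - u) \<and> lattice (u + int radius + 1) (int radius - u)"
  then obtain u where u: "lattice u (2 * int radius + 1 - u)"
      "lattice (u + int radius + 1) (int radius - u)"
    by blast
  have "int n dvd k * u" "int n dvd k * (2 * int radius + 1 - u)"
      "int n dvd k * (u + int radius + 1)"
    using lattice_annihilated[OF u(1) ka kb] lattice_annihilated[OF u(2) ka kb] by auto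
  moreover have
    "k = 2 * (k * (u + int radius + 1) - k * u) - (k * u + k * (2 * int radius + 1 - u))"
    by algebra
  ultimately show ?thesis
    by (metis dvd_add dvd_diff dvd_mult)
qed

lemma diamond_packing:
  assumes D: "finite D" "\<And>v. v \<in> D \<Longrightarrow> \<bar>fst v\<bar> + \<bar>snd v\<bar> \<le> Q"
    and Q: "2 * Q + 1 \<le> int min_dist" "2 * Q < int n"
  shows "card D \<le> n"
proof -
  define \<Psi> where "\<Psi> = (\<lambda>(k::nat, v::int \<times> int). (to_zn n (int k * int a + fst v),
      to_zn n (int k * int b + snd v)))"
  have "inj_on \<Psi> ({0..<n} \<times> D)"
  proof (rule inj_onI)
    fix p p' assume p: "p \<in> {0..<n} \<times> D" and p': "p' \<in> {0..<n} \<times> D" and eq: "\<Psi> p = \<Psi> p'"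
    obtain k x y k' x' y' where pp': "p = (k, x, y)" "p' = (k', x', y')"
      by (cases p, cases p') auto
    have k: "k \<in> {0..<n}" "(x, y) \<in> D" and k': "k' \<in> {0..<n}" "(x', y') \<in> D"
      using p p' pp' by auto
    define dk where "dk = int k - int k'"
    have "int n dvd (x' - x) - dk * int a" "int n dvd (y' - y) - dk * int b"
      using eq n_pos unfolding \<Psi>_def dk_def pp'
      by (simp_all add: to_zn_eq_iff dvd_diff_commute algebra_simps)
    then have lat: "lattice (x' - x) (y' - y)"
      unfolding in_lattice_def by blast
    have bounds: "\<bar>x' - x\<bar> + \<bar>y' - y\<bar> \<le> 2 * Q"
      using D(2)[OF k(2)] D(2)[OF k'(2)] by simp
    have "int n dvd x' - x \<and> int n dvd y' - y"
    proof (rule ccontr)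
      assume "\<not> ?thesis"
      then have "int min_dist \<le> lee_abs n (x' - x) + lee_abs n (y' - y)"
        using lattice_weight_ge[OF lat] by blast
      then show False
        using lee_abs_le_abs[OF n_pos, of "x' - x"] lee_abs_le_abs[OF n_pos, of "y' - y"] bounds Q
        by linarith
    qed
    moreover have "\<bar>x' - x\<bar> < int n" "\<bar>y' - y\<bar> < int n"
      using bounds Q by linarith+
    ultimately have xy: "x' = x" "y' = y"
      using dvd_abs_less_imp_eq_0[of "int n"] by fastforce+
    then have "int n dvd dk * int a" "int n dvd dk * int b"
      using \<open>int n dvd (x' - x) - dk * int a\<close> \<open>int n dvd (y' - y) - dk * int b\<close> by simp_all
    then have "int n dvd dk"
      by (rule generator_order)
    then have "k = k'"
      using k(1) k'(1) eq_if_dvd_diff_less unfolding dk_def by auto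
    with xy show "p = p'" by (simp add: pp')
  qed
  moreover have "\<Psi> ` ({0..<n} \<times> D) \<subseteq> zn2 n"
    unfolding \<Psi>_def using to_zn_less[OF n_pos] by (auto simp: zn2_iff)
  ultimately have "card ({0..<n} \<times> D) \<le> card (zn2 n)"
    by (intro card_inj_on_le) (auto simp: zn2_def)
  then have "n * card D \<le> n * n"
    by (simp add: card_cartesian_product zn2_def)
  then show ?thesis
    using n_pos by simp
qed

lemma radius_eq: "radius = t"
proof (rule ccontr)
  assume "radius \<noteq> t"
  then have "t + 1 \<le> radius"
    using t_le_radius by simp
  obtain D where D: "finite D" "card D = nat ((int t + 2)^2 + (int t + 1)^2)"
    "\<And>v. v \<in> D \<Longrightarrow> \<bar>fst v\<bar> + \<bar>snd v\<bar> \<le> int t + 1"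
    using lee_diamond[of "int t + 1"] by (auto simp: add.assoc)
  have "2 * (int t + 1) + 1 \<le> int min_dist"
    using \<open>t + 1 \<le> radius\<close> radius_min_dist by (simp add: algebra_simps)
  moreover have "2 * (int t + 1) < int n"
  proof -
    have "1 * 1 \<le> int t * int t"
      using t_pos by (intro mult_mono) simp_all
    then show ?thesis
      using n_eq by (simp add: power2_eq_square)
  qed
  ultimately have "card D \<le> n"
    using diamond_packing[of D "int t + 1"] D(1,3) by blast
  then show False
    using D(2) n_eq by (simp add: power2_eq_square nat_add_distrib nat_mult_distrib algebra_simps)
qed

lemma lattice_contains_t_t1: "lattice (int t) (int t + 1) \<or> lattice (int t + 1) (int t)"
  using antidiagonal_cases unfolding radius_eq
proof
  assume "\<exists>u. (u = int t \<or> u = int t + 1) \<and> lattice u (2 * int t + 1 - u)"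
  then show ?thesis
    by (auto simp: algebra_simps)
next
  assume "\<exists>u. lattice u (2 * int t + 1 - u) \<and> lattice (u + int t + 1) (int t - u)"
  then obtain u where u: "lattice u (2 * int t + 1 - u)" "lattice (u + int t + 1) (int t - u)"
    by blast
  \<comment> \<open>then \<open>(t + 1, - (t + 1))\<close>, and hence \<open>(1, -1)\<close>, lie in the lattice,
    since \<open>t + 1\<close> is a unit modulo \<open>n\<close>\<close>
  have "lattice (int t + 1) (- (int t + 1))"
    using in_lattice_diff[OF u(2) u(1)] by (simp add: algebra_simps)
  then have "lattice (- 2 * int t * (int t + 1)) (- 2 * int t * (- (int t + 1)))"
    by (rule in_lattice_mult)
  moreover have "1 - (- 2 * int t * (int t + 1)) = int n"
    "- 1 - (- 2 * int t * (- (int t + 1))) = - int n"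
    using n_eq by (simp_all add: power2_eq_square algebra_simps)
  then have "int n dvd 1 - (- 2 * int t * (int t + 1))"
      "int n dvd - 1 - (- 2 * int t * (- (int t + 1)))"
    by (simp_all only: dvd_refl dvd_minus_iff)
  ultimately have "lattice 1 (- 1)"
    by (rule in_lattice_cong)
  moreover have "\<not> int n dvd 1"
    using n_ge_5 by simp
  ultimately have "int min_dist \<le> lee_abs n 1 + lee_abs n (- 1)"
    using lattice_weight_ge by blast
  moreover have "lee_abs n 1 = 1"
    using n_ge_5 by (simp add: lee_abs_eq_self)
  ultimately show ?thesis
    using min_dist_ge t_pos lee_abs_uminus[of n 1] by linarith
qed

lemma lattice_rotation_generator: "lattice (- int b) (int a)"
proof -
  have n: "int n = 2 * int t * int t + 2 * int t + 1"
    using n_eq by (simp add: power2_eq_square)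
  from lattice_contains_t_t1 show ?thesis
  proof
    assume "lattice (int t) (int t + 1)"
    then show ?thesis
      using in_lattice_rotate_generator[OF n] by blast
  next
    assume "lattice (int t + 1) (int t)"
    then have "in_lattice n b a (- int a) (int b)"
      using in_lattice_rotate_generator[OF n] in_lattice_swap by blast
    then have "lattice (int b) (- int a)"
      using in_lattice_swap by blast
    then show ?thesis
      using in_lattice_mult[of n a b "int b" "- int a" "- 1"] by simp
  qed
qed

lemma lattice_rotate: "lattice u v \<Longrightarrow> lattice (- v) u"
  by (rule in_lattice_rotate[OF lattice_rotation_generator])

end

section \<open>Grids\<close>

definition reindex :: "nat \<Rightarrow> (nat \<times> nat \<Rightarrow> nat \<times> nat) \<Rightarrow> (nat \<times> nat \<Rightarrow> nat) \<Rightarrow> nat \<times> nat \<Rightarrow> nat" where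
  "reindex n h A = (\<lambda>p. if p \<in> zn2 n then A (h p) else 0)"

definition zero_outside :: "nat \<Rightarrow> (nat \<times> nat \<Rightarrow> nat) \<Rightarrow> bool" where
  "zero_outside n A \<longleftrightarrow> (\<forall>p. p \<notin> zn2 n \<longrightarrow> A p = 0)"

lemma zero_outside_reindex: "zero_outside n (reindex n h A)"
  unfolding zero_outside_def reindex_def by simp

lemma reindex_reindex:
  "(\<And>p. p \<in> zn2 n \<Longrightarrow> h p \<in> zn2 n) \<Longrightarrow> reindex n h (reindex n h' A) = reindex n (h' \<circ> h) A"
  unfolding reindex_def by auto

lemma reindex_cong: "(\<And>p. p \<in> zn2 n \<Longrightarrow> h p = h' p) \<Longrightarrow> reindex n h A = reindex n h' A"
  unfolding reindex_def by auto

lemma reindex_id: "zero_outside n A \<Longrightarrow> (\<And>p. p \<in> zn2 n \<Longrightarrow> h p = p) \<Longrightarrow> reindex n h A = A"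
  unfolding reindex_def zero_outside_def by auto

definition shift :: "nat \<Rightarrow> int \<Rightarrow> int \<Rightarrow> nat \<times> nat \<Rightarrow> nat \<times> nat" where
  "shift n u v p = (to_zn n (int (fst p) - u), to_zn n (int (snd p) - v))"

lemma shift_zn2: "0 < n \<Longrightarrow> shift n u v p \<in> zn2 n"
  unfolding shift_def zn2_iff by (simp add: to_zn_less)

lemma shift_shift: "0 < n \<Longrightarrow> shift n u v (shift n u' v' p) = shift n (u' + u) (v' + v) p"
  unfolding shift_def by (simp add: to_zn_diff_to_zn algebra_simps)

lemma shift_0: "p \<in> zn2 n \<Longrightarrow> shift n 0 0 p = p"
  unfolding shift_def zn2_iff by (simp add: to_zn_of_nat)

lemma shift_lee_dist:
  assumes "0 < n" "p \<in> zn2 n" "q \<in> zn2 n"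
  shows "lee_dist n (shift n u v p) (shift n u v q) = lee_dist n p q"
  using lee_dist_to_zn[OF assms(1), of "int (fst p) - u" "int (snd p) - v"
      "int (fst q) - u" "int (snd q) - v"]
    lee_dist_eq_lee_abs[OF assms(2,3)]
  unfolding shift_def by simp

lemma inj_on_shift: "0 < n \<Longrightarrow> inj_on (shift n u v) (zn2 n)"
  by (rule inj_onI)
    (auto simp: shift_def zn2_iff to_zn_eq_iff prod_eq_iff intro: eq_if_dvd_diff_less)

lemma tau1_eq_reindex: "tau1 n A = reindex n (shift n 1 0) A"
  unfolding tau1_def reindex_def shift_def zn2_iff
  by (auto simp: fun_eq_iff to_zn_of_nat mod_pred_eq_to_zn[simplified])

lemma tau2_eq_reindex: "tau2 n A = reindex n (shift n 0 1) A"
  unfolding tau2_def reindex_def shift_def zn2_iff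
  by (auto simp: fun_eq_iff to_zn_of_nat mod_pred_eq_to_zn[simplified])

lemma tau1_funpow: "0 < n \<Longrightarrow> zero_outside n A \<Longrightarrow> (tau1 n ^^ k) A = reindex n (shift n (int k) 0) A"
proof (induction k)
  case 0
  then show ?case by (simp add: reindex_id shift_0)
next
  case (Suc k)
  then show ?case
    by (simp add: tau1_eq_reindex reindex_reindex shift_zn2 shift_shift comp_def add.commute)
qed

lemma tau2_funpow: "0 < n \<Longrightarrow> zero_outside n A \<Longrightarrow> (tau2 n ^^ k) A = reindex n (shift n 0 (int k)) A"
proof (induction k)
  case 0
  then show ?case by (simp add: reindex_id shift_0)
next
  case (Suc k)
  then show ?case
    by (simp add: tau2_eq_reindex reindex_reindex shift_zn2 shift_shift comp_def add.commute)
qed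

lemma rot_eq_reindex: "rot n A = reindex n (\<lambda>(i, j). (n - 1 - j, i)) A"
  unfolding rot_def reindex_def zn2_iff by (auto simp: fun_eq_iff)

lemma latin_square_reindex_prod:
  assumes S: "latin_square n S"
    and \<alpha>: "inj_on \<alpha> {0..<n}" "\<alpha> ` {0..<n} \<subseteq> {0..<n}"
    and \<beta>: "inj_on \<beta> {0..<n}" "\<beta> ` {0..<n} \<subseteq> {0..<n}"
  shows "latin_square n (reindex n (\<lambda>(i, j). (\<alpha> i, \<beta> j)) S)"
proof -
  have rows: "inj_on (\<lambda>j. S (i, j)) {0..<n}" and cols: "inj_on (\<lambda>j. S (j, i)) {0..<n}" if "i < n"
      for i
    using S that unfolding latin_square_def by auto
  have "inj_on ((\<lambda>j. S (\<alpha> i, j)) \<circ> \<beta>) {0..<n}" "inj_on ((\<lambda>i. S (i, \<beta> j)) \<circ> \<alpha>) {0..<n}"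
    if "i < n" "j < n" for i j
  proof -
    have "\<alpha> i < n" "\<beta> j < n"
      using that \<alpha>(2) \<beta>(2) by (auto simp: image_subset_iff)
    then show "inj_on ((\<lambda>j. S (\<alpha> i, j)) \<circ> \<beta>) {0..<n}" "inj_on ((\<lambda>i. S (i, \<beta> j)) \<circ> \<alpha>) {0..<n}"
      using \<alpha> \<beta> by (auto intro!: comp_inj_on inj_on_subset[OF rows] inj_on_subset[OF cols])
  qed
  moreover have "S (\<alpha> i, \<beta> j) \<in> {1..n}" if "i < n" "j < n" for i j
  proof -
    have "(\<alpha> i, \<beta> j) \<in> zn2 n"
      using that \<alpha>(2) \<beta>(2) by (auto simp: zn2_iff image_subset_iff)
    then show ?thesis
      using S unfolding latin_square_def by blast
  qed
  moreover have "inj_on (\<lambda>j. reindex n (\<lambda>(i, j). (\<alpha> i, \<beta> j)) S (i, j)) {0..<n} \<longleftrightarrow>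
      inj_on ((\<lambda>j. S (\<alpha> i, j)) \<circ> \<beta>) {0..<n}"
    "inj_on (\<lambda>j. reindex n (\<lambda>(i, j). (\<alpha> i, \<beta> j)) S (j, i)) {0..<n} \<longleftrightarrow>
      inj_on ((\<lambda>j. S (j, \<beta> i)) \<circ> \<alpha>) {0..<n}"
    if "i < n" for i
    using that by (auto intro!: inj_on_cong simp: reindex_def zn2_iff)
  ultimately show ?thesis
    unfolding latin_square_def by (auto simp: reindex_def zn2_iff)
qed

lemma latin_square_reindex_swap:
  assumes "latin_square n S"
  shows "latin_square n (reindex n prod.swap S)"
proof -
  have "inj_on (\<lambda>j. reindex n prod.swap S (i, j)) {0..<n} \<longleftrightarrow> inj_on (\<lambda>j. S (j, i)) {0..<n}"
    "inj_on (\<lambda>j. reindex n prod.swap S (j, i)) {0..<n} \<longleftrightarrow> inj_on (\<lambda>j. S (i, j)) {0..<n}"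
    if "i < n" for i
    using that by (auto intro!: inj_on_cong simp: reindex_def zn2_iff)
  moreover have "prod.swap p \<in> zn2 n" if "p \<in> zn2 n" for p
    using that by (simp add: zn2_iff)
  ultimately show ?thesis
    using assms unfolding latin_square_def by (simp add: reindex_def)
qed

lemma latin_square_reindex_shift:
  assumes "0 < n" "latin_square n S"
  shows "latin_square n (reindex n (shift n u v) S)"
proof -
  have "shift n u v = (\<lambda>(i, j). (to_zn n (int i + - u), to_zn n (int j + - v)))"
    by (auto simp: shift_def fun_eq_iff)
  then show ?thesis
    using latin_square_reindex_prod[OF assms(2) inj_on_to_zn_add[OF assms(1), of "- u"] _
        inj_on_to_zn_add[OF assms(1), of "- v"]] to_zn_less[OF assms(1)]
    by (simp only: image_subset_iff atLeastLessThan_iff) blast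
qed

locale palette_code =
  fixes n t :: nat and C :: "(nat \<times> nat) set"
  assumes finite_code: "finite C" and card_code: "card C = n" and code_subset: "C \<subseteq> zn2 n"
    and unique_nearest: "\<And>p. p \<in> zn2 n \<Longrightarrow> \<exists>!c. c \<in> C \<and> lee_dist n p c \<le> t"
begin

definition nearest :: "nat \<times> nat \<Rightarrow> nat \<times> nat" where
  "nearest p = (THE c. c \<in> C \<and> lee_dist n p c \<le> t)"

lemma nearest: "p \<in> zn2 n \<Longrightarrow> nearest p \<in> C \<and> lee_dist n p (nearest p) \<le> t"
  unfolding nearest_def by (rule theI'[OF unique_nearest])

lemma nearest_eqI: "p \<in> zn2 n \<Longrightarrow> c \<in> C \<Longrightarrow> lee_dist n p c \<le> t \<Longrightarrow> nearest p = c"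
  using nearest unique_nearest by blast

abbreviation codewords :: "(nat \<times> nat) list" where
  "codewords \<equiv> sorted_list_of_set C"

lemma codewords: "distinct codewords" "length codewords = n" "set codewords = C"
  using finite_code card_code by auto

lemma palette_nth:
  assumes p: "p \<in> zn2 n"
  shows "palette n t C p \<in> {1..n} \<and> codewords ! (palette n t C p - 1) = nearest p"
proof -
  have ball_iff: "p \<in> lee_ball n t (codewords ! (i - 1)) \<longleftrightarrow> codewords ! (i - 1) = nearest p"
    if "i \<in> {1..n}" for i
  proof -
    have "i - 1 < length codewords"
      using that codewords(2) by auto
    then have c: "codewords ! (i - 1) \<in> C"
      using nth_mem codewords(3) by blast
    have "p \<in> lee_ball n t (codewords ! (i - 1)) \<longleftrightarrow> lee_dist n p (codewords ! (i - 1)) \<le> t"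
      using p by (simp add: lee_ball_def)
    also have "\<dots> \<longleftrightarrow> codewords ! (i - 1) = nearest p"
      using nearest[OF p] nearest_eqI[OF p c] by auto
    finally show ?thesis .
  qed
  obtain k where k: "k < n" "codewords ! k = nearest p"
    and k_unique: "\<And>k'. k' < n \<Longrightarrow> codewords ! k' = nearest p \<Longrightarrow> k' = k"
    using distinct_Ex1[of codewords "nearest p"] codewords nearest[OF p] by auto
  have "i \<in> {1..n} \<and> p \<in> lee_ball n t (codewords ! (i - 1)) \<longleftrightarrow> i = Suc k" for i
  proof
    assume i: "i \<in> {1..n} \<and> p \<in> lee_ball n t (codewords ! (i - 1))"
    then have "i - 1 = k"
      using ball_iff[of i] k_unique[of "i - 1"] by auto
    moreover have "1 \<le> i"
      using i by simp
    ultimately show "i = Suc k" by arith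
  next
    assume "i = Suc k"
    then show "i \<in> {1..n} \<and> p \<in> lee_ball n t (codewords ! (i - 1))"
      using k ball_iff[of i] by simp
  qed
  then have "palette n t C p = Suc k"
    using p unfolding palette_def by simp
  then show ?thesis
    using k by simp
qed

lemma palette_eq_iff:
  assumes "p \<in> zn2 n" "q \<in> zn2 n"
  shows "palette n t C p = palette n t C q \<longleftrightarrow> nearest p = nearest q"
proof
  assume "nearest p = nearest q"
  then have "codewords ! (palette n t C p - 1) = codewords ! (palette n t C q - 1)"
    using palette_nth assms by simp
  moreover have "palette n t C p - 1 < n" "palette n t C q - 1 < n"
    "1 \<le> palette n t C p" "1 \<le> palette n t C q"
    using palette_nth[OF assms(1)] palette_nth[OF assms(2)] by auto
  ultimately show "palette n t C p = palette n t C q"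
    using nth_eq_iff_index_eq[OF codewords(1)] codewords(2) by simp
qed (use palette_nth[OF assms(1)] palette_nth[OF assms(2)] in simp)

lemma orthogonal_reindex:
  assumes h: "\<And>p. p \<in> zn2 n \<Longrightarrow> h p \<in> zn2 n" "inj_on h (zn2 n)" "\<And>c. c \<in> C \<Longrightarrow> h c \<in> C"
    and iso: "\<And>p q. p \<in> zn2 n \<Longrightarrow> q \<in> zn2 n \<Longrightarrow> lee_dist n (h p) (h q) = lee_dist n p q"
    and S: "orthogonal n S (palette n t C)"
  shows "orthogonal n (reindex n h S) (palette n t C)"
proof -
  have nearest_h: "nearest (h p) = h (nearest p)" if "p \<in> zn2 n" for p
  proof (rule nearest_eqI)
    show "h p \<in> zn2 n" "h (nearest p) \<in> C"
      using that nearest[OF that] h by auto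
    show "lee_dist n (h p) (h (nearest p)) \<le> t"
      using iso[OF that, of "nearest p"] nearest[OF that] code_subset by auto
  qed
  show ?thesis
    unfolding orthogonal_def
  proof (rule inj_onI)
    fix p q assume p: "p \<in> zn2 n" and q: "q \<in> zn2 n"
      and eq: "(reindex n h S p, palette n t C p) = (reindex n h S q, palette n t C q)"
    then have "S (h p) = S (h q)" "nearest (h p) = nearest (h q)"
      using palette_eq_iff nearest_h by (auto simp: reindex_def)
    then have "h p = h q"
      using S h(1) p q palette_eq_iff unfolding orthogonal_def inj_on_def by blast
    then show "p = q"
      using h(2) p q by (simp add: inj_on_def)
  qed
qed

end

lemma equiv_relabel_rel:
  assumes entries: "\<And>S p. S \<in> X \<Longrightarrow> p \<in> zn2 n \<Longrightarrow> S p \<in> {1..n}"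
  shows "equiv X (relabel_rel n X)"
proof (rule equivI)
  show "relabel_rel n X \<subseteq> X \<times> X"
    unfolding relabel_rel_def by auto
  show "refl_on X (relabel_rel n X)"
    by (rule refl_onI) (auto simp: relabel_rel_def intro!: exI[of _ id])
  show "sym (relabel_rel n X)"
  proof (rule symI)
    fix S1 S2 assume "(S1, S2) \<in> relabel_rel n X"
    then obtain \<sigma> where S: "S1 \<in> X" "S2 \<in> X" and \<sigma>: "bij_betw \<sigma> {1..n} {1..n}"
      and eq: "\<forall>p\<in>zn2 n. \<sigma> (S1 p) = S2 p"
      unfolding relabel_rel_def by auto
    have "\<forall>p\<in>zn2 n. inv_into {1..n} \<sigma> (S2 p) = S1 p"
      using eq entries[OF S(1)] inv_into_f_f[OF bij_betw_imp_inj_on[OF \<sigma>]] by force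
    then show "(S2, S1) \<in> relabel_rel n X"
      using S bij_betw_inv_into[OF \<sigma>] unfolding relabel_rel_def by blast
  qed
  show "trans (relabel_rel n X)"
  proof (rule transI)
    fix S1 S2 S3 assume "(S1, S2) \<in> relabel_rel n X" "(S2, S3) \<in> relabel_rel n X"
    then obtain \<sigma> \<tau> where "S1 \<in> X" "S3 \<in> X" "bij_betw \<sigma> {1..n} {1..n}" "bij_betw \<tau> {1..n} {1..n}"
      "\<forall>p\<in>zn2 n. \<sigma> (S1 p) = S2 p" "\<forall>p\<in>zn2 n. \<tau> (S2 p) = S3 p"
      unfolding relabel_rel_def by auto
    then show "(S1, S3) \<in> relabel_rel n X"
      unfolding relabel_rel_def using bij_betw_trans by fastforce
  qed
qed

lemma relabel_rel_reindex:
  assumes "(S1, S2) \<in> relabel_rel n X" "reindex n h S1 \<in> X" "reindex n h S2 \<in> X"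
    and "\<And>p. p \<in> zn2 n \<Longrightarrow> h p \<in> zn2 n"
  shows "(reindex n h S1, reindex n h S2) \<in> relabel_rel n X"
  using assms unfolding relabel_rel_def by (auto simp: reindex_def)

section \<open>Perfect Sudoku grids and the group \<open>G_S\<close>\<close>

locale sudoku_setting = perfect_lee_code +
  fixes x1 x2 :: nat
begin

abbreviation code :: "(nat \<times> nat) set" where
  "code \<equiv> translate_code n (x1, x2) (lin_code n a b)"

lemma code_iff: "c \<in> code \<longleftrightarrow> c \<in> zn2 n \<and> lattice (int (fst c) - int x1) (int (snd c) - int x2)"
  by (rule translate_lin_code_iff[OF n_pos])

lemma code_eq_image:
  "code = (\<lambda>k. (to_zn n (int x1 + int k * int a), to_zn n (int x2 + int k * int b))) ` {0..<n}"
proof (intro set_eqI iffI)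
  fix c assume "c \<in> code"
  then obtain k where c: "c \<in> zn2 n" "int n dvd int (fst c) - int x1 - k * int a"
    "int n dvd int (snd c) - int x2 - k * int b"
    unfolding code_iff in_lattice_def by blast
  define k' where "k' = to_zn n k"
  have k': "int n dvd int k' - k" "k' < n"
    unfolding k'_def using dvd_of_nat_to_zn to_zn_less n_pos by blast+
  have "(int x1 + int k' * int a) - int (fst c) =
      (int k' - k) * int a - (int (fst c) - int x1 - k * int a)"
    "(int x2 + int k' * int b) - int (snd c) =
        (int k' - k) * int b - (int (snd c) - int x2 - k * int b)"
    by algebra+
  then have "int n dvd (int x1 + int k' * int a) - int (fst c)"
      "int n dvd (int x2 + int k' * int b) - int (snd c)"
    using c k'(1) by (metis dvd_diff dvd_mult2)+
  then have "to_zn n (int x1 + int k' * int a) = fst c" "to_zn n (int x2 + int k' * int b) = snd c"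
    using c(1) by (simp_all add: zn2_iff to_zn_eq_nat_iff)
  then have "c = (to_zn n (int x1 + int k' * int a), to_zn n (int x2 + int k' * int b))"
    by (simp add: prod_eq_iff)
  then show "c \<in> (\<lambda>k. (to_zn n (int x1 + int k * int a),
      to_zn n (int x2 + int k * int b))) ` {0..<n}"
    using k'(2) by auto
next
  fix c assume "c \<in> (\<lambda>k. (to_zn n (int x1 + int k * int a),
      to_zn n (int x2 + int k * int b))) ` {0..<n}"
  then obtain k where c: "c = (to_zn n (int x1 + int k * int a), to_zn n (int x2 + int k * int b))"
    by blast
  have "int n dvd int (fst c) - int x1 - int k * int a"
      "int n dvd int (snd c) - int x2 - int k * int b"
    unfolding c using dvd_of_nat_to_zn[OF n_pos] by (simp_all add: algebra_simps)
  then show "c \<in> code"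
    unfolding code_iff in_lattice_def c by (auto simp: zn2_iff to_zn_less[OF n_pos])
qed

lemma card_code: "card code = n"
proof -
  have "inj_on (\<lambda>k. (to_zn n (int x1 + int k * int a), to_zn n (int x2 + int k * int b))) {0..<n}"
  proof (rule inj_onI)
    fix k k' assume k: "k \<in> {0..<n}" "k' \<in> {0..<n}"
      and eq: "(to_zn n (int x1 + int k * int a), to_zn n (int x2 + int k * int b)) =
        (to_zn n (int x1 + int k' * int a), to_zn n (int x2 + int k' * int b))"
    then have "int n dvd (int k - int k') * int a" "int n dvd (int k - int k') * int b"
      by (simp_all add: to_zn_eq_iff[OF n_pos] algebra_simps)
    then have "int n dvd int k - int k'"
      by (rule generator_order)
    then show "k = k'"
      using k eq_if_dvd_diff_less by auto
  qed
  then show ?thesis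
    unfolding code_eq_image by (simp add: card_image)
qed

lemma code_subset: "code \<subseteq> zn2 n"
  using code_iff by blast

text \<open>The covering radius of the code is \<open>t\<close> and its minimum distance exceeds \<open>2 t\<close>.\<close>
lemma unique_nearest_codeword:
  assumes p: "p \<in> zn2 n"
  shows "\<exists>!c. c \<in> code \<and> lee_dist n p c \<le> t"
proof (rule ex_ex1I)
  obtain u v where uv: "lattice u v"
    and close:
      "lee_abs n ((int (fst p) - int x1) - u) + lee_abs n ((int (snd p) - int x2) - v) \<le> int t"
    using lattice_covers radius_eq by metis
  define c where "c = (to_zn n (int x1 + u), to_zn n (int x2 + v))"
  have "int n dvd int (fst c) - int x1 - u" "int n dvd int (snd c) - int x2 - v"
    unfolding c_def using dvd_of_nat_to_zn[OF n_pos] by (simp_all add: algebra_simps)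
  then have c: "c \<in> code"
    unfolding code_iff c_def using in_lattice_cong[OF uv]
    by (simp add: zn2_iff to_zn_less[OF n_pos])
  have "int (lee_dist n p c) =
      lee_abs n ((int (fst p) - int x1) - u) + lee_abs n ((int (snd p) - int x2) - v)"
    using lee_dist_to_zn[OF n_pos, of "int (fst p)" "int (snd p)" "int x1 + u" "int x2 + v"] p
    by (simp add: c_def zn2_iff to_zn_of_nat algebra_simps)
  with close c show "\<exists>c. c \<in> code \<and> lee_dist n p c \<le> t"
    by (intro exI[of _ c]) simp
next
  fix c c' assume c: "c \<in> code \<and> lee_dist n p c \<le> t" and c': "c' \<in> code \<and> lee_dist n p c' \<le> t"
  let ?d1 = "int (fst c) - int (fst c')" and ?d2 = "int (snd c) - int (snd c')"
  have lat: "lattice ?d1 ?d2"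
    using in_lattice_diff c c' unfolding code_iff by fastforce
  have z: "c \<in> zn2 n" "c' \<in> zn2 n"
    using c c' code_subset by auto
  have "lee_abs n ?d1 + lee_abs n ?d2 \<le> int (lee_dist n p c) + int (lee_dist n p c')"
    using lee_dist_eq_lee_abs[OF p z(1)] lee_dist_eq_lee_abs[OF p z(2)]
      lee_abs_triangle[OF n_pos, of "int (fst c) - int (fst p)" "int (fst p) - int (fst c')"]
      lee_abs_triangle[OF n_pos, of "int (snd c) - int (snd p)" "int (snd p) - int (snd c')"]
      lee_abs_minus_commute[of n "int (fst c)" "int (fst p)"]
      lee_abs_minus_commute[of n "int (snd c)" "int (snd p)"]
    by simp
  then have "int n dvd ?d1 \<and> int n dvd ?d2"
    using lattice_weight_ge[OF lat] min_dist_ge c c' by fastforce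
  then show "c = c'"
    using z eq_if_dvd_diff_less unfolding zn2_iff prod_eq_iff by blast
qed

sublocale palette_code n t code
  using finite_subset[OF code_subset] card_code code_subset unique_nearest_codeword
  by unfold_locales (auto simp: zn2_def)

text \<open>The quarter turn \<open>(u, v) \<mapsto> (- v, u)\<close> about the point \<open>(x1, x2)\<close>.\<close>
definition turn :: "nat \<times> nat \<Rightarrow> nat \<times> nat" where
  "turn p = (to_zn n (int x1 + int x2 - int (snd p)), to_zn n (int (fst p) + (int x2 - int x1)))"

lemma turn_zn2: "turn p \<in> zn2 n"
  unfolding turn_def zn2_iff by (simp add: to_zn_less[OF n_pos])

lemma inj_on_turn: "inj_on turn (zn2 n)"
  by (rule inj_onI) (auto simp: turn_def zn2_iff to_zn_eq_iff[OF n_pos] prod_eq_iff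
      dvd_diff_commute intro: eq_if_dvd_diff_less)

lemma turn_lee_dist: "p \<in> zn2 n \<Longrightarrow> q \<in> zn2 n \<Longrightarrow> lee_dist n (turn p) (turn q) = lee_dist n p q"
  using lee_dist_eq_lee_abs[of p n q] lee_abs_minus_commute[of n "int (snd p)" "int (snd q)"]
    lee_dist_to_zn[OF n_pos, of "int x1 + int x2 - int (snd p)" "int (fst p) + (int x2 - int x1)"
      "int x1 + int x2 - int (snd q)" "int (fst q) + (int x2 - int x1)"]
  unfolding turn_def by simp

lemma turn_code: "c \<in> code \<Longrightarrow> turn c \<in> code"
proof -
  assume "c \<in> code"
  then have "lattice (- (int (snd c) - int x2)) (int (fst c) - int x1)"
    unfolding code_iff by (blast intro: lattice_rotate)
  moreover have "int n dvd int (fst (turn c)) - int x1 - (- (int (snd c) - int x2))"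
    using dvd_of_nat_to_zn[OF n_pos, of "int x1 + int x2 - int (snd c)"]
    by (simp add: turn_def algebra_simps)
  moreover have "int n dvd int (snd (turn c)) - int x2 - (int (fst c) - int x1)"
    using dvd_of_nat_to_zn[OF n_pos, of "int (fst c) + (int x2 - int x1)"]
    by (simp add: turn_def algebra_simps)
  ultimately show "turn c \<in> code"
    unfolding code_iff using turn_zn2 in_lattice_cong by blast
qed

lemma latin_square_reindex_turn:
  assumes "latin_square n S"
  shows "latin_square n (reindex n turn S)"
proof -
  let ?\<alpha> = "\<lambda>i. to_zn n (int x1 + int x2 - int i)"
      and ?\<beta> = "\<lambda>j. to_zn n (int j + (int x2 - int x1))"
  have "turn = (\<lambda>(i, j). (?\<alpha> i, ?\<beta> j)) \<circ> prod.swap"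
    by (auto simp: turn_def fun_eq_iff algebra_simps)
  moreover have "reindex n prod.swap (reindex n (\<lambda>(i, j). (?\<alpha> i, ?\<beta> j)) S) =
      reindex n ((\<lambda>(i, j). (?\<alpha> i, ?\<beta> j)) \<circ> prod.swap) S"
    by (rule reindex_reindex) (simp add: zn2_iff)
  ultimately have "reindex n turn S = reindex n prod.swap (reindex n (\<lambda>(i, j). (?\<alpha> i, ?\<beta> j)) S)"
    by simp
  moreover have "latin_square n (reindex n (\<lambda>(i, j). (?\<alpha> i, ?\<beta> j)) S)"
    using latin_square_reindex_prod[OF assms inj_on_to_zn_diff[OF n_pos] _ inj_on_to_zn_add[OF n_pos]]
      to_zn_less[OF n_pos]
    by (simp only: image_subset_iff atLeastLessThan_iff) blast
  ultimately show ?thesis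
    by (simp add: latin_square_reindex_swap)
qed

definition turn_grid :: "(nat \<times> nat \<Rightarrow> nat) \<Rightarrow> nat \<times> nat \<Rightarrow> nat" where
  "turn_grid =
      tau2 n ^^ nat ((int x1 + int x2 + 1) mod int n) \<circ>
      tau1 n ^^ nat ((int x1 - int x2) mod int n) \<circ> rot n"

definition shift_grid :: "(nat \<times> nat \<Rightarrow> nat) \<Rightarrow> nat \<times> nat \<Rightarrow> nat" where
  "shift_grid = tau1 n ^^ a \<circ> tau2 n ^^ b"

lemma turn_grid_eq: "turn_grid A = reindex n turn A"
proof -
  define \<alpha> where "\<alpha> = (int x1 + int x2 + 1) mod int n"
  define \<beta> where "\<beta> = (int x1 - int x2) mod int n"
  let ?r = "\<lambda>(i, j). (n - 1 - j, i)"
  have "turn_grid A = (tau2 n ^^ nat \<alpha>) ((tau1 n ^^ nat \<beta>) (reindex n ?r A))"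
    by (simp add: turn_grid_def \<alpha>_def \<beta>_def rot_eq_reindex)
  also have "\<dots> = reindex n (?r \<circ> shift n \<beta> 0 \<circ> shift n 0 \<alpha>) A"
    using n_pos by (simp add: \<alpha>_def \<beta>_def tau1_funpow tau2_funpow zero_outside_reindex
        reindex_reindex shift_zn2)
  also have "\<dots> = reindex n turn A"
  proof (rule reindex_cong)
    fix p assume "p \<in> zn2 n"
    have "n - 1 - to_zn n (int (snd p) - \<alpha>) = to_zn n (int x1 + int x2 - int (snd p))"
      unfolding pred_diff_to_zn[OF n_pos] to_zn_eq_iff[OF n_pos] \<alpha>_def
      by (simp add: mod_eq_dvd_iff[symmetric] mod_simps)
    moreover have "to_zn n (int (fst p) - \<beta>) = to_zn n (int (fst p) + (int x2 - int x1))"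
      unfolding to_zn_eq_iff[OF n_pos] \<beta>_def
      by (simp add: mod_eq_dvd_iff[symmetric] mod_simps)
    ultimately show "(?r \<circ> shift n \<beta> 0 \<circ> shift n 0 \<alpha>) p = turn p"
      using n_pos by (simp add: shift_shift turn_def shift_def[of n \<beta> \<alpha>])
  qed
  finally show ?thesis .
qed

lemma shift_grid_eq: "zero_outside n A \<Longrightarrow> shift_grid A = reindex n (shift n (int a) (int b)) A"
  using n_pos
  by (simp add: shift_grid_def tau1_funpow tau2_funpow zero_outside_reindex reindex_reindex
      shift_zn2 shift_shift comp_def)

abbreviation grids :: "(nat \<times> nat \<Rightarrow> nat) set" where
  "grids \<equiv> perfect_sudoku_grids n t code"

lemma reindex_grids:
  assumes h: "\<And>p. p \<in> zn2 n \<Longrightarrow> h p \<in> zn2 n" "inj_on h (zn2 n)" "\<And>c. c \<in> code \<Longrightarrow> h c \<in> code"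
    and iso: "\<And>p q. p \<in> zn2 n \<Longrightarrow> q \<in> zn2 n \<Longrightarrow> lee_dist n (h p) (h q) = lee_dist n p q"
    and latin: "latin_square n (reindex n h S)"
    and S: "S \<in> grids"
  shows "reindex n h S \<in> grids"
proof -
  have "orthogonal n (reindex n h S) (palette n t code)"
    by (rule orthogonal_reindex[where h = h]) (use h iso S in \<open>auto simp: perfect_sudoku_grids_def\<close>)
  then show ?thesis
    using latin zero_outside_reindex[of n h S] unfolding perfect_sudoku_grids_def zero_outside_def
    by simp
qed

lemma turn_grid_closed: "S \<in> grids \<Longrightarrow> turn_grid S \<in> grids"
  unfolding turn_grid_eq
  by (rule reindex_grids[OF turn_zn2 inj_on_turn turn_code turn_lee_dist latin_square_reindex_turn])
    (auto simp: perfect_sudoku_grids_def)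

lemma shift_code: "c \<in> code \<Longrightarrow> shift n (int a) (int b) c \<in> code"
proof -
  assume "c \<in> code"
  then have "lattice (int (fst c) - int x1 - int a) (int (snd c) - int x2 - int b)"
    unfolding code_iff using in_lattice_diff in_lattice_generator by blast
  moreover have
    "int n dvd int (fst (shift n (int a) (int b) c)) - int x1 - (int (fst c) - int x1 - int a)"
    using dvd_of_nat_to_zn[OF n_pos, of "int (fst c) - int a"] by (simp add: shift_def
        algebra_simps)
  moreover have
    "int n dvd int (snd (shift n (int a) (int b) c)) - int x2 - (int (snd c) - int x2 - int b)"
    using dvd_of_nat_to_zn[OF n_pos, of "int (snd c) - int b"] by (simp add: shift_def
        algebra_simps)
  ultimately show ?thesis
    unfolding code_iff using shift_zn2[OF n_pos] in_lattice_cong by blast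
qed

lemma grids_zero_outside: "S \<in> grids \<Longrightarrow> zero_outside n S"
  unfolding perfect_sudoku_grids_def zero_outside_def by simp

lemma shift_grid_closed: "S \<in> grids \<Longrightarrow> shift_grid S \<in> grids"
  unfolding shift_grid_eq[OF grids_zero_outside]
  by (rule reindex_grids[OF shift_zn2[OF n_pos] inj_on_shift[OF n_pos] shift_code
        shift_lee_dist[OF n_pos] latin_square_reindex_shift[OF n_pos]])
    (auto simp: perfect_sudoku_grids_def)

abbreviation relabel :: "((nat \<times> nat \<Rightarrow> nat) \<times> (nat \<times> nat \<Rightarrow> nat)) set" where
  "relabel \<equiv> relabel_rel n grids"

lemma equiv_relabel: "equiv grids relabel"
  by (rule equiv_relabel_rel) (auto simp: perfect_sudoku_grids_def latin_square_def)

lemma relabel_grids: "(S1, S2) \<in> relabel \<Longrightarrow> S1 \<in> grids \<and> S2 \<in> grids"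
  unfolding relabel_rel_def by blast

lemma turn_grid_respects:
  assumes "(S1, S2) \<in> relabel"
  shows "(turn_grid S1, turn_grid S2) \<in> relabel"
proof -
  have "turn_grid S1 \<in> grids" "turn_grid S2 \<in> grids"
    using relabel_grids[OF assms] turn_grid_closed by blast+
  then show ?thesis
    unfolding turn_grid_eq by (intro relabel_rel_reindex[OF assms]) (simp_all add: turn_zn2)
qed

lemma shift_grid_respects:
  assumes "(S1, S2) \<in> relabel"
  shows "(shift_grid S1, shift_grid S2) \<in> relabel"
proof -
  have S: "S1 \<in> grids" "S2 \<in> grids"
    using relabel_grids[OF assms] by blast+
  then have "shift_grid S1 \<in> grids" "shift_grid S2 \<in> grids"
    using shift_grid_closed by blast+
  then show ?thesis
    unfolding shift_grid_eq[OF grids_zero_outside[OF S(1)]]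
      shift_grid_eq[OF grids_zero_outside[OF S(2)]]
    by (intro relabel_rel_reindex[OF assms]) (simp_all add: shift_zn2[OF n_pos])
qed

lemma turn_turn: "turn (turn p) = (to_zn n (2 * int x1 - int (fst p)),
    to_zn n (2 * int x2 - int (snd p)))"
proof -
  have "turn (turn p) = (to_zn n (int x1 + int x2 - (int (fst p) + (int x2 - int x1))),
      to_zn n ((int x1 + int x2 - int (snd p)) + (int x2 - int x1)))"
    unfolding turn_def by (simp only: fst_conv snd_conv to_zn_add_to_zn[OF n_pos]
        to_zn_diff_to_zn'[OF n_pos])
  then show ?thesis
    by (simp add: algebra_simps)
qed

lemma turn_funpow_4: "p \<in> zn2 n \<Longrightarrow> (turn ^^ 4) p = p"
  using n_pos
  by (simp add: numeral_eq_Suc turn_turn to_zn_diff_to_zn' zn2_iff prod_eq_iff to_zn_of_nat)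

lemma turn_grid_funpow: "zero_outside n A \<Longrightarrow> (turn_grid ^^ k) A = reindex n (turn ^^ k) A"
proof (induction k)
  case (Suc k)
  have "(turn_grid ^^ Suc k) A = turn_grid ((turn_grid ^^ k) A)"
    by simp
  also have "\<dots> = reindex n turn (reindex n (turn ^^ k) A)"
    by (simp only: Suc.IH[OF Suc.prems] turn_grid_eq)
  also have "\<dots> = reindex n (turn ^^ Suc k) A"
    by (simp add: reindex_reindex turn_zn2 funpow_Suc_right del: funpow.simps(2))
  finally show ?case .
qed (simp add: reindex_id)

lemma turn_grid_order: "zero_outside n A \<Longrightarrow> (turn_grid ^^ 4) A = A"
  by (simp add: turn_grid_funpow turn_funpow_4 reindex_id)

lemma shift_grid_funpow:
  "zero_outside n A \<Longrightarrow> (shift_grid ^^ k) A = reindex n (shift n (int k * int a) (int k * int b)) A"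
proof (induction k)
  case (Suc k)
  have "(shift_grid ^^ Suc k) A =
      shift_grid (reindex n (shift n (int k * int a) (int k * int b)) A)"
    by (simp only: funpow.simps(2) comp_apply Suc.IH[OF Suc.prems])
  also have "\<dots> = reindex n (shift n (int (Suc k) * int a) (int (Suc k) * int b)) A"
    using n_pos
    by (simp add: shift_grid_eq zero_outside_reindex reindex_reindex shift_zn2 comp_def shift_shift
        algebra_simps)
  finally show ?case .
qed (simp add: reindex_id shift_0)

lemma shift_grid_order: "zero_outside n A \<Longrightarrow> (shift_grid ^^ n) A = A"
proof -
  assume A: "zero_outside n A"
  have "shift n (int n * int a) (int n * int b) p = p" if "p \<in> zn2 n" for p
    using that by (simp add: shift_def zn2_iff prod_eq_iff to_zn_eq_nat_iff)
  then show ?thesis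
    by (simp add: shift_grid_funpow[OF A] reindex_id[OF A])
qed

lemma turn_shift_commute:
  assumes m: "int n dvd int a + int m * int b" "int n dvd int b - int m * int a"
    and A: "zero_outside n A"
  shows "turn_grid (shift_grid A) = (shift_grid ^^ m) (turn_grid A)"
proof -
  have "turn_grid (shift_grid A) = reindex n (shift n (int a) (int b) \<circ> turn) A"
    by (simp add: turn_grid_eq shift_grid_eq[OF A] reindex_reindex turn_zn2)
  also have "\<dots> = reindex n (turn \<circ> shift n (int m * int a) (int m * int b)) A"
  proof (rule reindex_cong)
    fix p assume "p \<in> zn2 n"
    let ?i = "int (fst p)" and ?j = "int (snd p)"
    let ?x = "int x1 + int x2" and ?y = "int x2 - int x1"
    have "(?x - ?j - int a) - (?x - (?j - int m * int b)) = - (int a + int m * int b)"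
      "(?i + ?y - int b) - (?i - int m * int a + ?y) = - (int b - int m * int a)"
      by algebra+
    then have "int n dvd (?x - ?j - int a) - (?x - (?j - int m * int b))"
      "int n dvd (?i + ?y - int b) - (?i - int m * int a + ?y)"
      using m by (simp_all only: dvd_minus_iff)
    then show "(shift n (int a) (int b) \<circ> turn) p =
        (turn \<circ> shift n (int m * int a) (int m * int b)) p"
      using n_pos by (simp add: turn_def shift_def to_zn_diff_to_zn to_zn_diff_to_zn'
          to_zn_add_to_zn to_zn_eq_iff)
  qed
  also have "\<dots> = (shift_grid ^^ m) (turn_grid A)"
    by (simp add: turn_grid_eq shift_grid_funpow zero_outside_reindex reindex_reindex
        shift_zn2[OF n_pos])
  finally show ?thesis .
qed

theorem card_class_orbit_dvd_4n:
  assumes "X \<in> grids // relabel"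
  shows "card (class_orbit (G_S n a b x1 x2) (grids // relabel) X) dvd 4 * n"
proof -
  obtain m where m: "int n dvd int a + int m * int b" "int n dvd int b - int m * int a"
    using rotation_multiplier[OF n_pos lattice_rotation_generator] by blast
  interpret compatible_maps grids relabel turn_grid shift_grid m
    using equiv_relabel turn_grid_respects shift_grid_respects turn_shift_commute[OF m]
        grids_zero_outside
    by unfold_locales auto
  have "G_S n a b x1 x2 = generated turn_grid shift_grid"
    by (simp add: G_S_def turn_grid_def shift_grid_def)
  then show ?thesis
    using card_class_orbit_dvd[of 4 n X] turn_grid_order shift_grid_order grids_zero_outside
      n_pos assms
    by simp
qed

end

theorem mainTheorem3:
  fixes t n a b x1 x2 :: nat
  assumes "t \<ge> 1"
    and "n = 2 * t^2 + 2 * t + 1"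
    and "a < n" and "b < n" and "(a, b) \<noteq> (0, 0)"
    and "is_perfect n (lin_code n a b)"
    and "t_error_correcting n t (lin_code n a b)"
    and "x1 < n" and "x2 < n"
  shows "\<forall>X \<in> perfect_sudoku_grids n t (translate_code n (x1, x2) (lin_code n a b))
               // relabel_rel n (perfect_sudoku_grids n t (translate_code n (x1, x2) (lin_code n a b))).
           card (class_orbit (G_S n a b x1 x2)
                   (perfect_sudoku_grids n t (translate_code n (x1, x2) (lin_code n a b))
                      // relabel_rel n (perfect_sudoku_grids n t (translate_code n (x1, x2) (lin_code n a b))))
                   X) dvd 4 * n"
proof -
  interpret sudoku_setting t n a b x1 x2
    by unfold_locales (fact assms)+
  show ?thesis
    using card_class_orbit_dvd_4n by blast
qed

end
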